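(* $\mathcal D_{(11,0,1)}$ is a variety biregular to $\mathbb P^2\times\mathbb P^1$; in particular it is irreducible and smooth. The same holds for $\mathcal D_{(1,0,11)}$.
   Context: $\mathbb P^7$ is the projective space of nonzero polynomials $\sum_{0\le i,j\le2,(i,j)\ne(2,2)}a_{ij}z^iw^j$ up to scalars. $\mathcal D_{(11,0,1)}\subset\mathbb P^7$ is the set of classes of nonzero cubics $(a_1z+c_1)(a_2z+c_2)(b_3w+c_3)$, and $\mathcal D_{(1,0,11)}\subset\mathbb P^7$ the set of classes of nonzero cubics $(a_1z+c_1)(b_2w+c_2)(b_3w+c_3)$ (complex parameters). *)

theory Defs
  imports "HOL-Analysis.Analysis" "HOL-Computational_Algebra.Polynomial"
begin

text \<open>Homogeneous coordinate vectors for the index set I: functions vanishing outside I.\<close>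
definition vecs :: "'i set \<Rightarrow> ('i \<Rightarrow> complex) set" where
  "vecs I = {v. \<forall>i. i \<notin> I \<longrightarrow> v i = 0}"

definition pclass :: "('i \<Rightarrow> complex) \<Rightarrow> ('i \<Rightarrow> complex) set" where
  "pclass v = {(\<lambda>i. c * v i) | c. c \<noteq> 0}"

definition Proj :: "'i set \<Rightarrow> ('i \<Rightarrow> complex) set set" where
  "Proj I = pclass ` (vecs I - {\<lambda>_. 0})"

inductive_set polyfun :: "'i set \<Rightarrow> (('i \<Rightarrow> complex) \<Rightarrow> complex) set" for I where
  const: "(\<lambda>v. c) \<in> polyfun I"
| var: "i \<in> I \<Longrightarrow> (\<lambda>v. v i) \<in> polyfun I"
| add: "f \<in> polyfun I \<Longrightarrow> g \<in> polyfun I \<Longrightarrow> (\<lambda>v. f v + g v) \<in> polyfun I"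
| mult: "f \<in> polyfun I \<Longrightarrow> g \<in> polyfun I \<Longrightarrow> (\<lambda>v. f v * g v) \<in> polyfun I"

definition homog :: "'i set \<Rightarrow> nat \<Rightarrow> (('i \<Rightarrow> complex) \<Rightarrow> complex) \<Rightarrow> bool" where
  "homog I d f \<longleftrightarrow> f \<in> polyfun I \<and> (\<forall>c v. f (\<lambda>i. c * v i) = c ^ d * f v)"

definition vanish :: "(('i \<Rightarrow> complex) \<Rightarrow> complex) \<Rightarrow> ('i \<Rightarrow> complex) set \<Rightarrow> bool" where
  "vanish f p \<longleftrightarrow> (\<forall>v\<in>p. f v = 0)"

definition zariski_closed :: "'i set \<Rightarrow> ('i \<Rightarrow> complex) set set \<Rightarrow> bool" where
  "zariski_closed I X \<longleftrightarrow>
     (\<exists>F. finite F \<and> (\<forall>f\<in>F. \<exists>d. homog I d f) \<and> X = {p \<in> Proj I. \<forall>f\<in>F. vanish f p})"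

definition zariski_open_in :: "'i set \<Rightarrow> ('i \<Rightarrow> complex) set set \<Rightarrow> ('i \<Rightarrow> complex) set set \<Rightarrow> bool" where
  "zariski_open_in I X U \<longleftrightarrow> (\<exists>C. zariski_closed I C \<and> U = X - C)"

definition regular_map ::
  "'i set \<Rightarrow> 'j set \<Rightarrow> ('i \<Rightarrow> complex) set set \<Rightarrow>
   (('i \<Rightarrow> complex) set \<Rightarrow> ('j \<Rightarrow> complex) set) \<Rightarrow> bool" where
  "regular_map I J X \<phi> \<longleftrightarrow> X \<subseteq> Proj I \<and> \<phi> ` X \<subseteq> Proj J \<and>
     (\<forall>p\<in>X. \<exists>U g d. zariski_open_in I X U \<and> p \<in> U \<and> (\<forall>j\<in>J. homog I d (g j)) \<and>
        (\<forall>q\<in>U. \<forall>v\<in>q. (\<lambda>j. if j \<in> J then g j v else 0) \<noteq> (\<lambda>_. 0) \<and>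
                  \<phi> q = pclass (\<lambda>j. if j \<in> J then g j v else 0)))"

definition biregular ::
  "'i set \<Rightarrow> 'j set \<Rightarrow> ('i \<Rightarrow> complex) set set \<Rightarrow> ('j \<Rightarrow> complex) set set \<Rightarrow>
   (('i \<Rightarrow> complex) set \<Rightarrow> ('j \<Rightarrow> complex) set) \<Rightarrow> bool" where
  "biregular I J X Y \<phi> \<longleftrightarrow> bij_betw \<phi> X Y \<and> regular_map I J X \<phi> \<and>
     regular_map J I Y (the_inv_into X \<phi>)"

definition zar_irreducible :: "'i set \<Rightarrow> ('i \<Rightarrow> complex) set set \<Rightarrow> bool" where
  "zar_irreducible I X \<longleftrightarrow> X \<noteq> {} \<and>
     (\<forall>A B. zariski_closed I A \<and> zariski_closed I B \<and> X \<subseteq> A \<union> B \<longrightarrow> X \<subseteq> A \<or> X \<subseteq> B)"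

definition zar_dim :: "'i set \<Rightarrow> ('i \<Rightarrow> complex) set set \<Rightarrow> nat" where
  "zar_dim I X = (GREATEST n. \<exists>Z :: nat \<Rightarrow> ('i \<Rightarrow> complex) set set.
      (\<forall>k\<le>n. Z k \<subseteq> X \<and> zariski_closed I (Z k) \<and> zar_irreducible I (Z k)) \<and>
      (\<forall>k<n. Z k \<subset> Z (Suc k)))"

definition vanishing_homog :: "'i set \<Rightarrow> ('i \<Rightarrow> complex) set set \<Rightarrow> (('i \<Rightarrow> complex) \<Rightarrow> complex) set" where
  "vanishing_homog I X = {f. (\<exists>d. homog I d f) \<and> (\<forall>p\<in>X. vanish f p)}"

definition partial_fn :: "(('i \<Rightarrow> complex) \<Rightarrow> complex) \<Rightarrow> 'i \<Rightarrow> ('i \<Rightarrow> complex) \<Rightarrow> complex" where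
  "partial_fn f i v = deriv (\<lambda>t. f (v(i := v i + t))) 0"

text \<open>Smoothness via the Jacobian criterion: at each point, the Jacobian of the homogeneous
  ideal has rank (at least, hence exactly) the codimension.\<close>
definition zar_smooth :: "'i set \<Rightarrow> ('i \<Rightarrow> complex) set set \<Rightarrow> bool" where
  "zar_smooth I X \<longleftrightarrow> (\<forall>p\<in>X. \<forall>v\<in>p. \<exists>fs.
      length fs = card I - 1 - zar_dim I X \<and> set fs \<subseteq> vanishing_homog I X \<and>
      (\<forall>c :: nat \<Rightarrow> complex.
         (\<forall>i\<in>I. (\<Sum>k<length fs. c k * partial_fn (fs ! k) i v) = 0) \<longrightarrow>
         (\<forall>k<length fs. c k = 0)))"

text \<open>Index set of P^7: monomials z^i w^j, 0 \<le> i,j \<le> 2, (i,j) \<noteq> (2,2).\<close>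
definition P7idx :: "(nat \<times> nat) set" where
  "P7idx = {(i, j). i \<le> 2 \<and> j \<le> 2 \<and> (i, j) \<noteq> (2, 2)}"

text \<open>Bivariate polynomials as polynomials in w with coefficients polynomials in z;
  the coefficient of z^i w^j of P is coeff (coeff P j) i.\<close>
definition coeffvec :: "complex poly poly \<Rightarrow> (nat \<times> nat \<Rightarrow> complex)" where
  "coeffvec P = (\<lambda>(i, j). if (i, j) \<in> P7idx then coeff (coeff P j) i else 0)"

definition D_11_0_1 :: "(nat \<times> nat \<Rightarrow> complex) set set" where
  "D_11_0_1 = {pclass (coeffvec P) | P a1 c1 a2 c2 b3 c3.
      P = [:[:c1, a1:]:] * [:[:c2, a2:]:] * [:[:c3:], [:b3:]:] \<and> P \<noteq> 0}"

definition D_1_0_11 :: "(nat \<times> nat \<Rightarrow> complex) set set" where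
  "D_1_0_11 = {pclass (coeffvec P) | P a1 c1 b2 c2 b3 c3.
      P = [:[:c1, a1:]:] * [:[:c2:], [:b2:]:] * [:[:c3:], [:b3:]:] \<and> P \<noteq> 0}"

text \<open>P^2 x P^1 realised as a projective variety via the Segre embedding into P^5,
  with coordinates indexed by {0..2} x {0..1}.\<close>
definition Sidx :: "(nat \<times> nat) set" where
  "Sidx = {0..2} \<times> {0..1}"

definition segre_P2P1 :: "(nat \<times> nat \<Rightarrow> complex) set set" where
  "segre_P2P1 = {pclass (\<lambda>(i, j). if (i, j) \<in> Sidx then x i * y j else 0) | x y :: nat \<Rightarrow> complex.
      (\<exists>i\<le>2. x i \<noteq> 0) \<and> (\<exists>j\<le>1. y j \<noteq> 0)}"

end

theory Submission
  imports Defs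
begin

text \<open>A cubic (a1 z + c1)(a2 z + c2)(b3 w + c3) is the product of an arbitrary binary quadratic
  form in z (every such form splits over the complex numbers) and a linear form in w, so its
  coefficient vector is the rank one 3 \<times> 2 matrix of these coefficients: D_(11,0,1) is the Segre
  image of P^2 \<times> P^1 in P^7, and D_(1,0,11) is its transpose. The Segre variety is cut out by
  coordinates and 2 \<times> 2 minors; it is irreducible because any two of its points are joined by a
  polynomial curve; it has dimension 3 because its Hilbert function in degree d is at most
  (d + 1)^3, whereas a strict chain of r + 1 irreducible closed subsets forces a growth like
  m choose r along a sequence of degrees; and it is smooth by the Jacobian criterion applied to
  two coordinates and two minors through a nonzero entry.\<close>

lemma pclass_iff: "v \<in> pclass u \<longleftrightarrow> (\<exists>c. c \<noteq> 0 \<and> v = (\<lambda>i. c * u i))"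
  unfolding pclass_def by blast

lemma pclass_refl: "u \<in> pclass u"
  unfolding pclass_iff by (rule exI[of _ 1]) simp

lemma pclass_smult:
  assumes "c \<noteq> 0"
  shows "pclass (\<lambda>i. c * u i) = pclass u"
proof (rule set_eqI)
  fix v
  have "(\<exists>d. d \<noteq> 0 \<and> v = (\<lambda>i. d * (c * u i))) \<longleftrightarrow> (\<exists>d. d \<noteq> 0 \<and> v = (\<lambda>i. d * u i))"
  proof
    assume "\<exists>d. d \<noteq> 0 \<and> v = (\<lambda>i. d * (c * u i))"
    then show "\<exists>d. d \<noteq> 0 \<and> v = (\<lambda>i. d * u i)"
      using assms by (metis (no_types) mult.assoc mult_eq_0_iff)
  next
    assume "\<exists>d. d \<noteq> 0 \<and> v = (\<lambda>i. d * u i)"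
    then obtain d where "d \<noteq> 0" "v = (\<lambda>i. d * u i)" by blast
    with assms show "\<exists>d. d \<noteq> 0 \<and> v = (\<lambda>i. d * (c * u i))"
      by (intro exI[of _ "d / c"]) auto
  qed
  then show "v \<in> pclass (\<lambda>i. c * u i) \<longleftrightarrow> v \<in> pclass u"
    unfolding pclass_iff .
qed

lemma some_in_pclass: "\<exists>c. c \<noteq> 0 \<and> (SOME v. v \<in> pclass u) = (\<lambda>i. c * u i)"
  using someI[of "\<lambda>v. v \<in> pclass u", OF pclass_refl] unfolding pclass_iff .

lemma Proj_iff: "p \<in> Proj I \<longleftrightarrow> (\<exists>u. u \<in> vecs I \<and> u \<noteq> (\<lambda>_. 0) \<and> p = pclass u)"
  unfolding Proj_def by blast

lemma ProjE:
  assumes "p \<in> Proj I"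
  obtains u where "u \<in> vecs I" "u \<noteq> (\<lambda>_. 0)" "p = pclass u"
  using assms unfolding Proj_iff by blast

lemma nonzero_vec_coordinate:
  assumes "u \<noteq> (\<lambda>_. 0)"
  obtains k where "u k \<noteq> 0"
  using assms by fastforce

lemma smult_vec_nonzero:
  fixes c :: complex
  shows "c \<noteq> 0 \<Longrightarrow> u \<noteq> (\<lambda>_. 0) \<Longrightarrow> (\<lambda>i. c * u i) \<noteq> (\<lambda>_. 0)"
  by (metis mult_eq_0_iff)

lemma polyfun_smult: "f \<in> polyfun I \<Longrightarrow> (\<lambda>v. c * f v) \<in> polyfun I"
  by (rule polyfun.mult[OF polyfun.const])

lemma polyfun_diff:
  assumes "f \<in> polyfun I" "g \<in> polyfun I"
  shows "(\<lambda>v. f v - g v) \<in> polyfun I"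
  using polyfun.add[OF assms(1) polyfun_smult[OF assms(2), of "-1"]] by simp

lemma polyfun_sum:
  "(\<And>i. i < (n::nat) \<Longrightarrow> f i \<in> polyfun I) \<Longrightarrow> (\<lambda>v. \<Sum>i<n. f i v) \<in> polyfun I"
  by (induction n) (auto intro: polyfun.const polyfun.add)

lemma polyfun_power: "f \<in> polyfun I \<Longrightarrow> (\<lambda>v. f v ^ n) \<in> polyfun I"
  by (induction n) (auto intro: polyfun.const polyfun.mult)

lemma homog_var: "k \<in> I \<Longrightarrow> homog I 1 (\<lambda>v. v k)"
  unfolding homog_def by (auto intro: polyfun.var)

lemma homog_zero: "homog I d (\<lambda>v. 0)"
  unfolding homog_def by (auto intro: polyfun.const)

lemma homog_one: "homog I 0 (\<lambda>v. 1)"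
  unfolding homog_def by (auto intro: polyfun.const)

lemma homog_mult: "homog I d f \<Longrightarrow> homog I e g \<Longrightarrow> homog I (d + e) (\<lambda>v. f v * g v)"
  unfolding homog_def by (auto intro: polyfun.mult simp: power_add)

lemma homog_diff: "homog I d f \<Longrightarrow> homog I d g \<Longrightarrow> homog I d (\<lambda>v. f v - g v)"
  unfolding homog_def by (auto intro: polyfun_diff simp: right_diff_distrib)

lemma homog_smult: "homog I d f \<Longrightarrow> homog I d (\<lambda>v. c * f v)"
  unfolding homog_def by (auto intro: polyfun_smult)

lemma homog_sum:
  "(\<And>i. i < (n::nat) \<Longrightarrow> homog I d (f i)) \<Longrightarrow> homog I d (\<lambda>v. \<Sum>i<n. f i v)"
  unfolding homog_def by (auto intro!: polyfun_sum simp: sum_distrib_left)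

lemma homog_power: "homog I d f \<Longrightarrow> homog I (d * n) (\<lambda>v. f v ^ n)"
  unfolding homog_def by (auto intro!: polyfun_power simp: power_mult_distrib power_mult)

lemma homog_scale: "homog I d f \<Longrightarrow> f (\<lambda>i. c * v i) = c ^ d * f v"
  unfolding homog_def by blast

lemma homog_0_constant: "homog I 0 f \<Longrightarrow> f v = f (\<lambda>_. 0)"
  using homog_scale[of I 0 f 0 v] by simp

lemma vanish_pclass_iff: "homog I d f \<Longrightarrow> vanish f (pclass u) \<longleftrightarrow> f u = 0"
  unfolding vanish_def using homog_scale pclass_refl by (fastforce simp: pclass_iff)

lemma vanish_power_iff: "n \<ge> 1 \<Longrightarrow> vanish (\<lambda>v. f v ^ n) p \<longleftrightarrow> vanish f p"
  unfolding vanish_def by simp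

lemma zariski_closed_empty: "zariski_closed I {}"
  unfolding zariski_closed_def
  by (rule exI[of _ "{\<lambda>v. 1}"]) (use homog_one pclass_refl in \<open>auto simp: vanish_def Proj_iff\<close>)

lemma zariski_closed_zero_set: "homog I d h \<Longrightarrow> zariski_closed I {p \<in> Proj I. vanish h p}"
  unfolding zariski_closed_def by (rule exI[of _ "{h}"]) auto

lemma zariski_closed_subset_Proj: "zariski_closed I X \<Longrightarrow> X \<subseteq> Proj I"
  unfolding zariski_closed_def by auto

lemma zariski_open_in_self: "zariski_open_in I X X"
  unfolding zariski_open_in_def using zariski_closed_empty by blast

lemma zariski_closed_separating_form:
  assumes "zariski_closed I S" "p \<in> Proj I" "p \<notin> S"
  obtains f d where "homog I d f" "\<forall>q\<in>S. vanish f q" "\<not> vanish f p"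
proof -
  obtain F where F: "\<forall>f\<in>F. \<exists>d. homog I d f" "S = {p \<in> Proj I. \<forall>f\<in>F. vanish f p}"
    using assms(1) unfolding zariski_closed_def by blast
  then obtain f where "f \<in> F" "\<not> vanish f p" using assms(2,3) by blast
  with F that show ?thesis by blast
qed

lemma homog_separating_degree_pos:
  assumes "homog I d f" "vanish f q" "q \<in> Proj I" "\<not> vanish f p"
  shows "d \<ge> 1"
proof (rule ccontr)
  assume "\<not> d \<ge> 1"
  then have d: "d = 0" by simp
  obtain u where "q = pclass u" using assms(3) unfolding Proj_iff by blast
  then have "f u = 0" using assms(2) pclass_refl unfolding vanish_def by blast
  then have "\<forall>v. f v = 0" using homog_0_constant[of I f] assms(1) d by metis
  then show False using assms(4) unfolding vanish_def by blast
qed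

section \<open>Irreducibility and Hilbert functions\<close>

lemma not_vanish_at_member:
  assumes "homog I d f" "\<not> vanish f p" "p \<in> Proj I" "v \<in> p"
  shows "f v \<noteq> 0"
proof -
  obtain u where u: "p = pclass u" using assms(3) by (rule ProjE)
  then obtain c where "c \<noteq> 0" "v = (\<lambda>i. c * u i)" using assms(4) unfolding u pclass_iff by blast
  then show ?thesis using assms(2) homog_scale[OF assms(1)] vanish_pclass_iff[OF assms(1)] unfolding u by simp
qed

lemma polyfun_along_polynomial_curve:
  assumes "f \<in> polyfun I" and "\<forall>k. \<exists>P. \<forall>t. \<gamma> t k = poly P t"
  shows "\<exists>P. \<forall>t. f (\<gamma> t) = poly P t"
  using assms(1)
proof induct
  case (const c)
  show ?case by (rule exI[of _ "[:c:]"]) simp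
next
  case (var i)
  show ?case using assms(2) by blast
next
  case (add f g)
  then obtain P Q where "\<forall>t. f (\<gamma> t) = poly P t" "\<forall>t. g (\<gamma> t) = poly Q t" by blast
  then show ?case by (intro exI[of _ "P + Q"]) simp
next
  case (mult f g)
  then obtain P Q where "\<forall>t. f (\<gamma> t) = poly P t" "\<forall>t. g (\<gamma> t) = poly Q t" by blast
  then show ?case by (intro exI[of _ "P * Q"]) simp
qed

text \<open>Forms separating p1 from S and p2 from T restrict along the curve to two nonzero
  polynomials whose product vanishes at all but finitely many parameters.\<close>
lemma zar_irreducible_if_curve_connected:
  assumes ne: "X \<noteq> {}" and XP: "X \<subseteq> Proj I"
    and curves: "\<And>p1 p2. p1 \<in> X \<Longrightarrow> p2 \<in> X \<Longrightarrow> \<exists>\<gamma>. (\<forall>k. \<exists>P. \<forall>t. \<gamma> t k = poly P t) \<and>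
        \<gamma> 0 \<in> p1 \<and> \<gamma> 1 \<in> p2 \<and> finite {t. pclass (\<gamma> t) \<notin> X}"
  shows "zar_irreducible I X"
  unfolding zar_irreducible_def
proof (intro conjI allI impI ne)
  fix S T
  assume h: "zariski_closed I S \<and> zariski_closed I T \<and> X \<subseteq> S \<union> T"
  show "X \<subseteq> S \<or> X \<subseteq> T"
  proof (rule ccontr)
    assume "\<not> (X \<subseteq> S \<or> X \<subseteq> T)"
    then obtain p1 p2 where p1: "p1 \<in> X" "p1 \<notin> S" and p2: "p2 \<in> X" "p2 \<notin> T" by blast
    have closed: "zariski_closed I S" "zariski_closed I T" using h by blast+
    have "p1 \<in> Proj I" "p2 \<in> Proj I" using p1(1) p2(1) XP by blast+
    obtain f d where f: "homog I d f" "\<forall>q\<in>S. vanish f q" "\<not> vanish f p1"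
      by (rule zariski_closed_separating_form[OF closed(1) \<open>p1 \<in> Proj I\<close> p1(2)])
    obtain g e where g: "homog I e g" "\<forall>q\<in>T. vanish g q" "\<not> vanish g p2"
      by (rule zariski_closed_separating_form[OF closed(2) \<open>p2 \<in> Proj I\<close> p2(2)])
    obtain \<gamma> where \<gamma>: "\<forall>k. \<exists>P. \<forall>t. \<gamma> t k = poly P t" "\<gamma> 0 \<in> p1" "\<gamma> 1 \<in> p2"
      and bad: "finite {t. pclass (\<gamma> t) \<notin> X}"
      using curves[OF p1(1) p2(1)] by blast
    obtain PF where PF: "\<forall>t. f (\<gamma> t) = poly PF t"
      using polyfun_along_polynomial_curve[OF _ \<gamma>(1)] f(1) unfolding homog_def by blast
    obtain PG where PG: "\<forall>t. g (\<gamma> t) = poly PG t"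
      using polyfun_along_polynomial_curve[OF _ \<gamma>(1)] g(1) unfolding homog_def by blast
    have "PF * PG \<noteq> 0"
      using not_vanish_at_member[OF f(1,3) \<open>p1 \<in> Proj I\<close> \<gamma>(2)]
        not_vanish_at_member[OF g(1,3) \<open>p2 \<in> Proj I\<close> \<gamma>(3)] PF PG
      by (metis mult_eq_0_iff poly_0)
    then have "finite {t. poly (PF * PG) t = 0}" by (rule poly_roots_finite)
    moreover have "UNIV - {t. pclass (\<gamma> t) \<notin> X} \<subseteq> {t. poly (PF * PG) t = 0}"
    proof
      fix t assume "t \<in> UNIV - {t. pclass (\<gamma> t) \<notin> X}"
      then have "pclass (\<gamma> t) \<in> S \<or> pclass (\<gamma> t) \<in> T" using h by blast
      then have "f (\<gamma> t) = 0 \<or> g (\<gamma> t) = 0"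
        using f(2) g(2) pclass_refl unfolding vanish_def by blast
      then show "t \<in> {t. poly (PF * PG) t = 0}" using PF PG by auto
    qed
    ultimately have "finite (UNIV - {t. pclass (\<gamma> t) \<notin> X})" by (rule finite_subset[rotated])
    then show False using bad infinite_UNIV_char_0[where 'a = complex] by (metis Diff_infinite_finite)
  qed
qed

lemma underdetermined_system_nontrivial_solution:
  fixes k :: "'i \<Rightarrow> 'm \<Rightarrow> complex"
  assumes "finite M" "finite I" "card M < card I"
  shows "\<exists>a. (\<exists>i\<in>I. a i \<noteq> 0) \<and> (\<forall>m\<in>M. (\<Sum>i\<in>I. a i * k i m) = 0)"
  using assms
proof (induction M arbitrary: I k rule: finite_induct)
  case empty
  then obtain i where "i \<in> I" by fastforce
  then show ?case by (intro exI[of _ "\<lambda>_. 1"]) auto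
next
  case (insert m0 M)
  show ?case
  proof (cases "\<forall>i\<in>I. k i m0 = 0")
    case True
    then show ?thesis using insert.IH[of I k] insert.prems insert.hyps by auto
  next
    case False
    then obtain i0 where i0: "i0 \<in> I" "k i0 m0 \<noteq> 0" by blast
    define I' where "I' = I - {i0}"
    define k' where "k' i m = k i m - (k i m0 / k i0 m0) * k i0 m" for i m
    have "finite I'" "card M < card I'"
      using insert i0(1) unfolding I'_def by auto
    then obtain a' where a': "\<exists>i\<in>I'. a' i \<noteq> 0" "\<forall>m\<in>M. (\<Sum>i\<in>I'. a' i * k' i m) = 0"
      using insert.IH by blast
    define s where "s = (\<Sum>j\<in>I'. a' j * k j m0)"
    define a where "a i = (if i = i0 then - s / k i0 m0 else a' i)" for i
    have split: "(\<Sum>i\<in>I. a i * k i m) = a i0 * k i0 m + (\<Sum>i\<in>I'. a' i * k i m)" for m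
    proof -
      have "(\<Sum>i\<in>I. a i * k i m) = a i0 * k i0 m + (\<Sum>i\<in>I'. a i * k i m)"
        unfolding I'_def using insert.prems(1) i0(1) by (simp add: sum.remove)
      also have "(\<Sum>i\<in>I'. a i * k i m) = (\<Sum>i\<in>I'. a' i * k i m)"
        unfolding a_def I'_def by (intro sum.cong) auto
      finally show ?thesis .
    qed
    have "(\<Sum>i\<in>I. a i * k i m) = 0" if m: "m \<in> insert m0 M" for m
    proof (cases "m = m0")
      case True
      then have "(\<Sum>i\<in>I. a i * k i m) = a i0 * k i0 m0 + (\<Sum>i\<in>I'. a' i * k i m0)"
        by (simp add: split)
      then show ?thesis unfolding a_def s_def using i0(2) by simp
    next
      case False
      have "(\<Sum>i\<in>I'. a' i * k i m) = (\<Sum>i\<in>I'. a' i * k' i m + a' i * k i m0 * (k i0 m / k i0 m0))"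
        unfolding k'_def by (intro sum.cong) (auto simp: algebra_simps)
      also have "\<dots> = (\<Sum>i\<in>I'. a' i * k' i m) + s * (k i0 m / k i0 m0)"
        unfolding s_def by (simp add: sum.distrib sum_distrib_right mult.assoc sum_divide_distrib)
      also have "\<dots> = s * (k i0 m / k i0 m0)" using a'(2) m False by simp
      finally have "(\<Sum>i\<in>I'. a' i * k i m) = s * (k i0 m / k i0 m0)" .
      then show ?thesis unfolding split by (simp add: a_def i0(2))
    qed
    moreover have "\<exists>i\<in>I. a i \<noteq> 0" using a' unfolding a_def I'_def by auto
    ultimately show ?thesis by blast
  qed
qed

text \<open>There are n forms of degree d that are linearly independent as functions on the cone
  over W, i.e.\ the Hilbert function of W in degree d is at least n.\<close>
definition indep_forms :: "'i set \<Rightarrow> ('i \<Rightarrow> complex) set set \<Rightarrow> nat \<Rightarrow> nat \<Rightarrow> bool" where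
  "indep_forms I W d n \<longleftrightarrow> (\<exists>fs. (\<forall>i<n. homog I d (fs i)) \<and>
      (\<forall>a. (\<forall>p\<in>W. \<forall>v\<in>p. (\<Sum>i<n. a i * fs i v) = 0) \<longrightarrow> (\<forall>i<n. a i = 0)))"

lemma indep_forms_0: "indep_forms I W d 0"
  unfolding indep_forms_def by auto

lemma indep_forms_superset:
  assumes "indep_forms I W d n" "W \<subseteq> W'"
  shows "indep_forms I W' d n"
proof -
  obtain fs where "\<forall>i<n. homog I d (fs i)"
    and ind: "\<forall>a. (\<forall>p\<in>W. \<forall>v\<in>p. (\<Sum>i<n. a i * fs i v) = 0) \<longrightarrow> (\<forall>i<n. a i = 0)"
    using assms(1) unfolding indep_forms_def by blast
  moreover have "\<forall>i<n. a i = 0" if "\<forall>p\<in>W'. \<forall>v\<in>p. (\<Sum>i<n. a i * fs i v) = 0" for a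
    using ind that assms(2) by (meson subsetD)
  ultimately show ?thesis unfolding indep_forms_def by blast
qed

lemma indep_forms_mono:
  assumes "indep_forms I W d n" "m \<le> n"
  shows "indep_forms I W d m"
proof -
  obtain fs where hom: "\<forall>i<n. homog I d (fs i)"
    and ind: "\<forall>a. (\<forall>p\<in>W. \<forall>v\<in>p. (\<Sum>i<n. a i * fs i v) = 0) \<longrightarrow> (\<forall>i<n. a i = 0)"
    using assms(1) unfolding indep_forms_def by blast
  have "\<forall>i<m. a i = 0" if h: "\<forall>p\<in>W. \<forall>v\<in>p. (\<Sum>i<m. a i * fs i v) = 0" for a
  proof -
    define a' where "a' j = (if j < m then a j else 0)" for j
    have "(\<Sum>j<n. a' j * fs j v) = (\<Sum>j<m. a j * fs j v)" for v
      using sum.mono_neutral_cong_right[of "{..<n}" "{..<m}" "\<lambda>j. a' j * fs j v" "\<lambda>j. a j * fs j v"]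
        assms(2) unfolding a'_def by auto
    then have "\<forall>j<n. a' j = 0" using ind h by simp
    then show ?thesis using assms(2) unfolding a'_def by (metis order_less_le_trans)
  qed
  then show ?thesis using hom assms(2) unfolding indep_forms_def by (intro exI[of _ fs]) auto
qed

lemma indep_forms_1:
  assumes "p \<in> W" "W \<subseteq> Proj I"
  shows "indep_forms I W d 1"
proof -
  have "p \<in> Proj I" using assms by blast
  then obtain u where u: "u \<in> vecs I" "u \<noteq> (\<lambda>_. 0)" "p = pclass u" by (rule ProjE)
  then obtain k where k: "u k \<noteq> 0" by (auto elim: nonzero_vec_coordinate)
  then have "k \<in> I" using u(1) unfolding vecs_def by blast
  then have "homog I d (\<lambda>v. v k ^ d)" using homog_power[OF homog_var] by fastforce
  moreover have "a 0 = 0" if "\<forall>p\<in>W. \<forall>v\<in>p. (\<Sum>i<1. a i * v k ^ d) = 0" for a :: "nat \<Rightarrow> complex"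
  proof -
    have "(\<Sum>i<1. a i * u k ^ d) = 0"
      using that[rule_format, OF assms(1)[unfolded u(3)] pclass_refl] .
    then show ?thesis using k by simp
  qed
  ultimately show ?thesis unfolding indep_forms_def by (intro exI[of _ "\<lambda>_ v. v k ^ d"]) auto
qed

text \<open>The zero sets of f and g are closed and cover W.\<close>
lemma zar_irreducible_vanish_mult:
  assumes W: "zar_irreducible I W" "W \<subseteq> Proj I" and fg: "homog I d f" "homog I e g"
    and prod: "\<forall>p\<in>W. \<forall>v\<in>p. f v * g v = 0" and p0: "p0 \<in> W" "\<not> vanish f p0"
  shows "\<forall>p\<in>W. vanish g p"
proof -
  have "W \<subseteq> {p \<in> Proj I. vanish f p} \<union> {p \<in> Proj I. vanish g p}"
  proof
    fix p assume p: "p \<in> W"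
    then have "p \<in> Proj I" using W(2) by blast
    then obtain u where u: "p = pclass u" by (rule ProjE)
    then have "f u * g u = 0" using prod p pclass_refl by blast
    then show "p \<in> {p \<in> Proj I. vanish f p} \<union> {p \<in> Proj I. vanish g p}"
      using vanish_pclass_iff[OF fg(1)] vanish_pclass_iff[OF fg(2)] p W(2) u by auto
  qed
  then have "W \<subseteq> {p \<in> Proj I. vanish g p}"
    using W(1) zariski_closed_zero_set[OF fg(1)] zariski_closed_zero_set[OF fg(2)] p0
    unfolding zar_irreducible_def by blast
  then show ?thesis by blast
qed

lemma sum_lessThan_add: "(\<Sum>i<a + b. g i) = (\<Sum>i<a. g i) + (\<Sum>i<b. g (a + i :: nat))"
  by (induction b) (simp_all add: add_ac)

text \<open>A linear relation among the combined forms restricts on Z to a relation among the forms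
  independent on Z; what is left is f G = 0 on W, and irreducibility forces G = 0 on W.\<close>
lemma indep_forms_add:
  assumes Wi: "zar_irreducible I W" and WP: "W \<subseteq> Proj I" and ZW: "Z \<subseteq> W"
    and f: "homog I e f" "\<forall>q\<in>Z. vanish f q" "p0 \<in> W" "\<not> vanish f p0"
    and hW: "indep_forms I W d a" and hZ: "indep_forms I Z (d + e) b"
  shows "indep_forms I W (d + e) (a + b)"
proof -
  obtain fs where fsh: "\<forall>i<a. homog I d (fs i)"
    and fsi: "\<forall>c. (\<forall>p\<in>W. \<forall>v\<in>p. (\<Sum>i<a. c i * fs i v) = 0) \<longrightarrow> (\<forall>i<a. c i = 0)"
    using hW unfolding indep_forms_def by blast
  obtain hs where hsh: "\<forall>i<b. homog I (d + e) (hs i)"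
    and hsi: "\<forall>c. (\<forall>p\<in>Z. \<forall>v\<in>p. (\<Sum>i<b. c i * hs i v) = 0) \<longrightarrow> (\<forall>i<b. c i = 0)"
    using hZ unfolding indep_forms_def by blast
  define gs where "gs i = (if i < a then (\<lambda>v. f v * fs i v) else hs (i - a))" for i
  have "homog I (d + e) (gs i)" if "i < a + b" for i
    using homog_mult[OF f(1) fsh[rule_format]] hsh that unfolding gs_def by (auto simp: add.commute)
  moreover have "\<forall>i<a + b. c i = 0" if H: "\<forall>p\<in>W. \<forall>v\<in>p. (\<Sum>i<a + b. c i * gs i v) = 0" for c
  proof -
    define G where "G v = (\<Sum>i<a. c i * fs i v)" for v
    have split: "(\<Sum>i<a + b. c i * gs i v) = f v * G v + (\<Sum>i<b. c (a + i) * hs i v)" for v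
      unfolding sum_lessThan_add G_def gs_def by (simp add: sum_distrib_left algebra_simps)
    have "\<forall>p\<in>Z. \<forall>v\<in>p. (\<Sum>i<b. c (a + i) * hs i v) = 0"
    proof (intro ballI)
      fix p v assume "p \<in> Z" "v \<in> p"
      then have "f v = 0" using f(2) unfolding vanish_def by blast
      moreover have "(\<Sum>i<a + b. c i * gs i v) = 0" using H ZW \<open>p \<in> Z\<close> \<open>v \<in> p\<close> by blast
      ultimately show "(\<Sum>i<b. c (a + i) * hs i v) = 0" using split[of v] by simp
    qed
    then have cb: "\<forall>i<b. c (a + i) = 0" using hsi[rule_format, of "\<lambda>i. c (a + i)"] by blast
    have Gh: "homog I d G" unfolding G_def using fsh by (intro homog_sum homog_smult) auto
    have "\<forall>p\<in>W. \<forall>v\<in>p. f v * G v = 0" using H split cb by simp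
    then have "\<forall>p\<in>W. vanish G p" by (rule zar_irreducible_vanish_mult[OF Wi WP f(1) Gh _ f(3,4)])
    then have "\<forall>i<a. c i = 0" using fsi[rule_format, of c] unfolding vanish_def G_def by blast
    with cb show ?thesis by (metis add_diff_inverse_nat nat_add_left_cancel_less)
  qed
  ultimately show ?thesis unfolding indep_forms_def by blast
qed

section \<open>Dimension from the growth of Hilbert functions\<close>

text \<open>Suitable powers bring forms separating consecutive members of the chain to a common degree.\<close>
lemma chain_separating_forms:
  assumes chain: "\<forall>k\<le>r. zariski_closed I (Z k) \<and> zar_irreducible I (Z k)" "\<forall>k<r. Z k \<subset> Z (Suc k)"
  obtains E g p where "E \<ge> 1"
    "\<And>k. k < r \<Longrightarrow> homog I E (g k) \<and> (\<forall>q\<in>Z k. vanish (g k) q) \<and> p k \<in> Z (Suc k) \<and> \<not> vanish (g k) (p k)"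
proof -
  have "\<exists>e f p. e \<ge> 1 \<and> homog I e f \<and> (\<forall>q\<in>Z k. vanish f q) \<and> p \<in> Z (Suc k) \<and> \<not> vanish f p"
    if k: "k < r" for k
  proof -
    have closed: "zariski_closed I (Z k)" "zariski_closed I (Z (Suc k))" and "Z k \<noteq> {}"
      using chain k unfolding zar_irreducible_def by auto
    then obtain q where q: "q \<in> Z k" "q \<in> Proj I" using zariski_closed_subset_Proj by blast
    obtain p where p: "p \<in> Z (Suc k)" "p \<notin> Z k" using chain(2) k by blast
    then have "p \<in> Proj I" using zariski_closed_subset_Proj[OF closed(2)] by blast
    then obtain f e where f: "homog I e f" "\<forall>q\<in>Z k. vanish f q" "\<not> vanish f p"
      by (rule zariski_closed_separating_form[OF closed(1) _ p(2)])
    moreover have "e \<ge> 1" using homog_separating_degree_pos[OF f(1) _ q(2) f(3)] f(2) q(1) by blast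
    ultimately show ?thesis using p(1) by blast
  qed
  then obtain e f p where efp: "\<And>k. k < r \<Longrightarrow> e k \<ge> 1 \<and> homog I (e k) (f k) \<and>
      (\<forall>q\<in>Z k. vanish (f k) q) \<and> p k \<in> Z (Suc k) \<and> \<not> vanish (f k) (p k)"
    by metis
  define E where "E = (\<Prod>k<r. e k)"
  have E: "E \<ge> 1" unfolding E_def using efp by (intro prod_ge_1) auto
  have "homog I E (\<lambda>v. f k v ^ (E div e k)) \<and> (\<forall>q\<in>Z k. vanish (\<lambda>v. f k v ^ (E div e k)) q) \<and>
      p k \<in> Z (Suc k) \<and> \<not> vanish (\<lambda>v. f k v ^ (E div e k)) (p k)" if k: "k < r" for k
  proof -
    have "e k dvd E" unfolding E_def using k by (intro dvd_prodI) auto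
    then have "E div e k \<ge> 1" "e k * (E div e k) = E"
      using E efp[OF k] by (auto simp: div_greater_zero_iff dvd_imp_le)
    then show ?thesis using homog_power[of I "e k" "f k" "E div e k"] efp[OF k] vanish_power_iff by auto
  qed
  then show ?thesis using E that[of E "\<lambda>k v. f k v ^ (E div e k)" p] by blast
qed

text \<open>Along a strict chain of r + 1 irreducible closed sets, the Hilbert function of the top
  member in degree m E grows like m choose r; indep_forms_add realises Pascal's rule.\<close>
lemma indep_forms_chain_growth:
  assumes chain: "\<forall>k\<le>r. zariski_closed I (Z k) \<and> zar_irreducible I (Z k)" "\<forall>k<r. Z k \<subset> Z (Suc k)"
  obtains E where "E \<ge> 1" "\<And>m. indep_forms I (Z r) (m * E) (m choose r)"
proof -
  obtain E g p where E: "E \<ge> 1" and g: "\<And>k. k < r \<Longrightarrow> homog I E (g k) \<and>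
      (\<forall>q\<in>Z k. vanish (g k) q) \<and> p k \<in> Z (Suc k) \<and> \<not> vanish (g k) (p k)"
    using chain_separating_forms[OF chain] by metis
  have "indep_forms I (Z k) (m * E) (m choose k)" if "k \<le> r" for k m
    using that
  proof (induction k arbitrary: m)
    case 0
    have "zariski_closed I (Z 0)" "Z 0 \<noteq> {}" using chain(1) unfolding zar_irreducible_def by auto
    then show ?case using indep_forms_1 zariski_closed_subset_Proj by (metis binomial_n_0 ex_in_conv)
  next
    case (Suc k)
    note IHk = Suc.IH
    have k: "k < r" and Sk: "Suc k \<le> r" using Suc.prems by simp_all
    have W: "zar_irreducible I (Z (Suc k))" "Z (Suc k) \<subseteq> Proj I" "Z k \<subseteq> Z (Suc k)"
      using chain Sk k zariski_closed_subset_Proj[of I "Z (Suc k)"] by auto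
    show ?case
    proof (induction m)
      case 0
      show ?case by (simp add: indep_forms_0)
    next
      case (Suc m)
      have "indep_forms I (Z k) (m * E + E) (Suc m choose k)" using IHk[of "Suc m"] k by (simp add: add.commute)
      then have "indep_forms I (Z k) (m * E + E) (m choose k)"
        by (rule indep_forms_mono) (cases k, simp_all)
      then have "indep_forms I (Z (Suc k)) (m * E + E) ((m choose Suc k) + (m choose k))"
        using indep_forms_add[OF W, of E "g k" "p k"] g[OF k] Suc.IH by blast
      then show ?case by (simp add: add.commute)
    qed
  qed
  then show ?thesis using that E by blast
qed

lemma binomial_Suc_exceeds_power:
  fixes E r :: nat
  assumes "E \<ge> 1"
  obtains m where "(m * E + 1) ^ r < m choose Suc r"
proof -
  define m where "m = Suc r ^ Suc r * (2 * E) ^ r + 1"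
  have "Suc r \<le> Suc r ^ Suc r" by (rule self_le_power) auto
  moreover have "1 \<le> (2 * E) ^ r" using assms by simp
  then have "Suc r ^ Suc r * 1 \<le> Suc r ^ Suc r * (2 * E) ^ r" by (rule mult_le_mono2)
  ultimately have "Suc r \<le> m" unfolding m_def by linarith
  then have m_pos: "m > 0" by simp
  have "1 \<le> m * E" using assms m_pos by (simp add: Suc_le_eq)
  then have "(m * E + 1) ^ r \<le> (2 * m * E) ^ r" by (intro power_mono) auto
  then have "real ((m * E + 1) ^ r) \<le> real ((2 * m * E) ^ r)" by (simp only: of_nat_le_iff)
  also have "\<dots> = real m ^ r * (2 * real E) ^ r" by (simp add: power_mult_distrib)
  also have "\<dots> < real m ^ r * (real m / real (Suc r) ^ Suc r)"
  proof (rule mult_strict_left_mono)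
    have "real m = real (Suc r) ^ Suc r * (2 * real E) ^ r + 1"
      unfolding m_def by (simp only: of_nat_add of_nat_mult of_nat_power of_nat_1 of_nat_numeral)
    then have "real (Suc r) ^ Suc r * (2 * real E) ^ r < real m" by linarith
    then show "(2 * real E) ^ r < real m / real (Suc r) ^ Suc r"
      by (metis mult.commute pos_less_divide_eq zero_less_power of_nat_0_less_iff zero_less_Suc)
  qed (use m_pos in simp)
  also have "\<dots> = (real m / real (Suc r)) ^ Suc r" by (simp add: power_divide)
  also have "\<dots> \<le> real (m choose Suc r)" by (rule binomial_ge_n_over_k_pow_k) fact
  finally show ?thesis using that by (metis of_nat_less_iff)
qed

text \<open>The upper bound: a chain longer than r would make the Hilbert function grow faster than
  the polynomial bound of degree r.\<close>
lemma zar_dim_eqI: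
  assumes chain: "\<forall>k\<le>r. Z k \<subseteq> X \<and> zariski_closed I (Z k) \<and> zar_irreducible I (Z k)"
      "\<forall>k<r. Z k \<subset> Z (Suc k)"
    and hilbert: "\<And>d n. indep_forms I X d n \<Longrightarrow> n \<le> (d + 1) ^ r"
  shows "zar_dim I X = r"
  unfolding zar_dim_def
proof (rule Greatest_equality)
  show "\<exists>Z. (\<forall>k\<le>r. Z k \<subseteq> X \<and> zariski_closed I (Z k) \<and> zar_irreducible I (Z k)) \<and>
      (\<forall>k<r. Z k \<subset> Z (Suc k))"
    using chain by blast
next
  fix n
  assume "\<exists>Z. (\<forall>k\<le>n. Z k \<subseteq> X \<and> zariski_closed I (Z k) \<and> zar_irreducible I (Z k)) \<and>
      (\<forall>k<n. Z k \<subset> Z (Suc k))"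
  then obtain Z' where Z': "\<forall>k\<le>n. Z' k \<subseteq> X \<and> zariski_closed I (Z' k) \<and> zar_irreducible I (Z' k)"
      "\<forall>k<n. Z' k \<subset> Z' (Suc k)"
    by blast
  show "n \<le> r"
  proof (rule ccontr)
    assume "\<not> n \<le> r"
    then have long: "\<forall>k\<le>Suc r. zariski_closed I (Z' k) \<and> zar_irreducible I (Z' k)"
        "\<forall>k<Suc r. Z' k \<subset> Z' (Suc k)" "Z' (Suc r) \<subseteq> X"
      using Z' by auto
    obtain E where E: "E \<ge> 1" "\<And>m. indep_forms I (Z' (Suc r)) (m * E) (m choose Suc r)"
      using indep_forms_chain_growth[OF long(1,2)] by metis
    obtain m where "(m * E + 1) ^ r < m choose Suc r"
      by (rule binomial_Suc_exceeds_power[OF E(1)])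
    moreover have "m choose Suc r \<le> (m * E + 1) ^ r"
      using hilbert indep_forms_superset[OF E(2) long(3)] by blast
    ultimately show False by simp
  qed
qed

section \<open>Segre embeddings and their coordinate subvarieties\<close>

text \<open>The vector segre_vec b x y has the entry x i * y j at position (i, j) of P7idx, or at
  position (j, i) when b holds; the transposed embedding is the one that parametrises D_(1,0,11).\<close>
definition idx_swap :: "bool \<Rightarrow> nat \<times> nat \<Rightarrow> nat \<times> nat" where
  "idx_swap b k = (if b then prod.swap k else k)"

definition segre_vec :: "bool \<Rightarrow> (nat \<Rightarrow> complex) \<Rightarrow> (nat \<Rightarrow> complex) \<Rightarrow> nat \<times> nat \<Rightarrow> complex" where
  "segre_vec b x y k =
     (if idx_swap b k \<in> Sidx then x (fst (idx_swap b k)) * y (snd (idx_swap b k)) else 0)"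

lemma idx_swap_idx_swap [simp]: "idx_swap b (idx_swap b k) = k"
  by (cases k) (auto simp: idx_swap_def)

lemma idx_swap_inject [simp]: "idx_swap b k = idx_swap b k' \<longleftrightarrow> k = k'"
  by (metis idx_swap_idx_swap)

lemma Sidx_iff: "(i, j) \<in> Sidx \<longleftrightarrow> i \<le> 2 \<and> j \<le> 1"
  by (auto simp: Sidx_def)

lemma P7idx_iff: "(i, j) \<in> P7idx \<longleftrightarrow> i \<le> 2 \<and> j \<le> 2 \<and> (i, j) \<noteq> (2, 2)"
  by (auto simp: P7idx_def)

lemma idx_swap_P7idx_iff [simp]: "idx_swap b k \<in> P7idx \<longleftrightarrow> k \<in> P7idx"
  by (cases k) (auto simp: idx_swap_def P7idx_iff)

lemma idx_swap_Sidx_in_P7idx: "k \<in> Sidx \<Longrightarrow> idx_swap b k \<in> P7idx"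
  by (cases k) (auto simp: Sidx_iff P7idx_iff)

lemma card_P7idx: "card P7idx = 8"
proof -
  have eq: "P7idx = ({..2} \<times> {..2}) - {(2, 2)}" by (auto simp: P7idx_def)
  show ?thesis unfolding eq by (simp add: card_Diff_singleton)
qed

lemma segre_vec_at: "(i, j) \<in> Sidx \<Longrightarrow> segre_vec b x y (idx_swap b (i, j)) = x i * y j"
  by (simp add: segre_vec_def)

lemma segre_vec_smult_left: "segre_vec b (\<lambda>i. c * x i) y = (\<lambda>k. c * segre_vec b x y k)"
  by (auto simp: segre_vec_def fun_eq_iff)

lemma segre_vec_smult_right: "segre_vec b x (\<lambda>j. c * y j) = (\<lambda>k. c * segre_vec b x y k)"
  by (auto simp: segre_vec_def fun_eq_iff)

lemma segre_vec_in_vecs: "segre_vec b x y \<in> vecs P7idx"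
  unfolding vecs_def segre_vec_def
  by (auto dest: idx_swap_Sidx_in_P7idx[of _ b] simp del: idx_swap_P7idx_iff)

lemma segre_vec_nonzero:
  assumes "i \<le> 2" "j \<le> 1" "x i \<noteq> 0" "y j \<noteq> 0"
  shows "segre_vec b x y \<noteq> (\<lambda>_. 0)"
proof
  assume "segre_vec b x y = (\<lambda>_. 0)"
  then have "segre_vec b x y (idx_swap b (i, j)) = 0" by simp
  with assms segre_vec_at[of i j b x y] show False by (simp add: Sidx_iff)
qed

lemma segre_vec_cong:
  assumes "\<forall>i\<le>2. x i = x' i" "\<forall>j\<le>1. y j = y' j"
  shows "segre_vec b x y = segre_vec b x' y'"
proof
  fix k
  obtain i j where "idx_swap b k = (i, j)" by (cases "idx_swap b k")
  then show "segre_vec b x y k = segre_vec b x' y' k"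
    using assms by (cases "i \<le> 2 \<and> j \<le> 1") (auto simp: segre_vec_def Sidx_iff)
qed

definition segre_sub :: "bool \<Rightarrow> nat set \<Rightarrow> nat set \<Rightarrow> (nat \<times> nat \<Rightarrow> complex) set set" where
  "segre_sub b A B = {pclass (segre_vec b x y) | x y. (\<forall>i. i \<notin> A \<longrightarrow> x i = 0) \<and>
      (\<forall>j. j \<notin> B \<longrightarrow> y j = 0) \<and> (\<exists>i\<in>A. x i \<noteq> 0) \<and> (\<exists>j\<in>B. y j \<noteq> 0)}"

lemma segre_sub_iff: "p \<in> segre_sub b A B \<longleftrightarrow> (\<exists>x y. p = pclass (segre_vec b x y) \<and>
    (\<forall>i. i \<notin> A \<longrightarrow> x i = 0) \<and> (\<forall>j. j \<notin> B \<longrightarrow> y j = 0) \<and> (\<exists>i\<in>A. x i \<noteq> 0) \<and> (\<exists>j\<in>B. y j \<noteq> 0))"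
  unfolding segre_sub_def by blast

lemma segre_sub_mono: "A \<subseteq> A' \<Longrightarrow> B \<subseteq> B' \<Longrightarrow> segre_sub b A B \<subseteq> segre_sub b A' B'"
  unfolding segre_sub_def by blast

lemma segre_sub_vecE:
  assumes "p \<in> segre_sub b A B" "v \<in> p"
  obtains x y where "v = segre_vec b x y" "\<forall>i. i \<notin> A \<longrightarrow> x i = 0" "\<forall>j. j \<notin> B \<longrightarrow> y j = 0"
    "\<exists>i\<in>A. x i \<noteq> 0" "\<exists>j\<in>B. y j \<noteq> 0"
proof -
  obtain x y where p: "p = pclass (segre_vec b x y)" and x: "\<forall>i. i \<notin> A \<longrightarrow> x i = 0"
    and y: "\<forall>j. j \<notin> B \<longrightarrow> y j = 0" "\<exists>j\<in>B. y j \<noteq> 0" and x0: "\<exists>i\<in>A. x i \<noteq> 0"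
    using assms(1) unfolding segre_sub_iff by blast
  obtain c where c: "c \<noteq> 0" "v = (\<lambda>k. c * segre_vec b x y k)"
    using assms(2) unfolding p pclass_iff by blast
  show ?thesis
    by (rule that[of "\<lambda>i. c * x i" y]) (use c x x0 y in \<open>auto simp: segre_vec_smult_left\<close>)
qed

lemma segre_sub_basis_point:
  assumes "i \<in> A" "j \<in> B"
  shows "pclass (segre_vec b (\<lambda>k. if k = i then 1 else 0) (\<lambda>k. if k = j then 1 else 0)) \<in> segre_sub b A B"
  unfolding segre_sub_iff using assms by fastforce

lemma segre_sub_basis_point_notin:
  assumes "i \<le> 2" "j \<le> 1" "i \<notin> A \<or> j \<notin> B"
  shows "pclass (segre_vec b (\<lambda>k. if k = i then 1 else 0) (\<lambda>k. if k = j then 1 else 0)) \<notin> segre_sub b A B"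
proof
  let ?v = "segre_vec b (\<lambda>k. if k = i then 1 else 0) (\<lambda>k. if k = j then 1 else 0)"
  assume "pclass ?v \<in> segre_sub b A B"
  then obtain x y where xy: "?v = segre_vec b x y" "\<forall>i. i \<notin> A \<longrightarrow> x i = 0" "\<forall>j. j \<notin> B \<longrightarrow> y j = 0"
    "\<exists>i\<in>A. x i \<noteq> 0" "\<exists>j\<in>B. y j \<noteq> 0"
    by (rule segre_sub_vecE[OF _ pclass_refl])
  have ij: "(i, j) \<in> Sidx" using assms by (simp add: Sidx_iff)
  have "?v (idx_swap b (i, j)) = 1" using segre_vec_at[OF ij] by simp
  moreover have "segre_vec b x y (idx_swap b (i, j)) = 0" using segre_vec_at[OF ij] xy(2,3) assms(3) by auto
  ultimately show False using xy(1) by simp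
qed

definition minor :: "bool \<Rightarrow> nat \<Rightarrow> nat \<Rightarrow> nat \<Rightarrow> nat \<Rightarrow> (nat \<times> nat \<Rightarrow> complex) \<Rightarrow> complex" where
  "minor b i i' j j' v =
     v (idx_swap b (i, j)) * v (idx_swap b (i', j')) - v (idx_swap b (i, j')) * v (idx_swap b (i', j))"

definition minor_eqs :: "bool \<Rightarrow> ((nat \<times> nat \<Rightarrow> complex) \<Rightarrow> complex) set" where
  "minor_eqs b = (\<lambda>(i, i', j, j'). minor b i i' j j') ` ({..2} \<times> {..2} \<times> {..1} \<times> {..1})"

definition coord_eqs :: "bool \<Rightarrow> nat set \<Rightarrow> nat set \<Rightarrow> ((nat \<times> nat \<Rightarrow> complex) \<Rightarrow> complex) set" where
  "coord_eqs b A B = (\<lambda>k v. v k) ` {k \<in> P7idx. idx_swap b k \<notin> A \<times> B}"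

lemma homog_minor:
  assumes "i \<le> 2" "i' \<le> 2" "j \<le> 1" "j' \<le> 1"
  shows "homog P7idx 2 (minor b i i' j j')"
proof -
  have "homog P7idx (1 + 1) (minor b i i' j j')"
    unfolding minor_def using assms
    by (intro homog_diff homog_mult homog_var idx_swap_Sidx_in_P7idx) (auto simp: Sidx_iff)
  then show ?thesis by (simp only: one_add_one)
qed

lemma minor_in_minor_eqs:
  "i \<le> 2 \<Longrightarrow> i' \<le> 2 \<Longrightarrow> j \<le> 1 \<Longrightarrow> j' \<le> 1 \<Longrightarrow> minor b i i' j j' \<in> minor_eqs b"
  unfolding minor_eqs_def by (rule rev_image_eqI[of "(i, i', j, j')"]) auto

lemma coord_in_coord_eqs: "k \<in> P7idx \<Longrightarrow> idx_swap b k \<notin> A \<times> B \<Longrightarrow> (\<lambda>v. v k) \<in> coord_eqs b A B"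
  unfolding coord_eqs_def by (rule rev_image_eqI[of k]) auto

lemma homog_segre_eqs:
  assumes "f \<in> coord_eqs b A B \<union> minor_eqs b"
  shows "\<exists>d. homog P7idx d f"
  using assms
proof
  assume "f \<in> coord_eqs b A B"
  then obtain k where "k \<in> P7idx" "f = (\<lambda>v. v k)" unfolding coord_eqs_def by blast
  then have "homog P7idx 1 f" using homog_var by simp
  then show ?thesis ..
next
  assume "f \<in> minor_eqs b"
  then obtain i i' j j' where "i \<le> 2" "i' \<le> 2" "j \<le> 1" "j' \<le> 1" "f = minor b i i' j j'"
    unfolding minor_eqs_def by auto
  then have "homog P7idx 2 f" using homog_minor by simp
  then show ?thesis ..
qed

lemma segre_eqs_vanish:
  assumes "f \<in> coord_eqs b A B \<union> minor_eqs b"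
    and "\<forall>i. i \<notin> A \<longrightarrow> x i = 0" "\<forall>j. j \<notin> B \<longrightarrow> y j = 0"
  shows "f (segre_vec b x y) = 0"
  using assms unfolding coord_eqs_def minor_eqs_def minor_def segre_vec_def
  by (auto simp: Sidx_iff mem_Times_iff)

text \<open>The factors are the column and the normalised row through a nonzero entry.\<close>
lemma rank_one_factorisation:
  assumes A: "A \<subseteq> {..2}" and B: "B \<subseteq> {..1}" and u: "u \<noteq> (\<lambda>_. 0)"
    and out: "\<And>k. idx_swap b k \<notin> A \<times> B \<Longrightarrow> u k = 0"
    and minors: "\<And>i i' j j'. i \<le> 2 \<Longrightarrow> i' \<le> 2 \<Longrightarrow> j \<le> 1 \<Longrightarrow> j' \<le> 1 \<Longrightarrow> minor b i i' j j' u = 0"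
  shows "\<exists>x y. u = segre_vec b x y \<and> (\<forall>i. i \<notin> A \<longrightarrow> x i = 0) \<and> (\<forall>j. j \<notin> B \<longrightarrow> y j = 0) \<and>
    (\<exists>i\<in>A. x i \<noteq> 0) \<and> (\<exists>j\<in>B. y j \<noteq> 0)"
proof -
  obtain k0 where "u k0 \<noteq> 0" using u by (rule nonzero_vec_coordinate)
  then obtain i0 j0 where ij0: "i0 \<in> A" "j0 \<in> B" and u0: "u (idx_swap b (i0, j0)) \<noteq> 0"
    using out by (metis SigmaE idx_swap_idx_swap)
  have i0: "i0 \<le> 2" and j0: "j0 \<le> 1" using ij0 A B by auto
  define x where "x i = (if i \<le> 2 then u (idx_swap b (i, j0)) else 0)" for i
  define y where "y j = (if j \<le> 1 then u (idx_swap b (i0, j)) / u (idx_swap b (i0, j0)) else 0)" for j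
  have "u k = segre_vec b x y k" for k
  proof (cases "idx_swap b k \<in> Sidx")
    case True
    then obtain i j where ij: "idx_swap b k = (i, j)" "i \<le> 2" "j \<le> 1"
      by (cases "idx_swap b k") (auto simp: Sidx_iff)
    then have k: "k = idx_swap b (i, j)" by (metis idx_swap_idx_swap)
    have "u (idx_swap b (i, j)) * u (idx_swap b (i0, j0)) = u (idx_swap b (i, j0)) * u (idx_swap b (i0, j))"
      using minors[OF ij(2) i0 ij(3) j0] unfolding minor_def by simp
    then show ?thesis
      using ij u0 True unfolding k x_def y_def segre_vec_def by (simp add: field_simps)
  next
    case False
    then have "idx_swap b k \<notin> A \<times> B" using A B by (auto simp: Sidx_def)
    with False show ?thesis using out unfolding segre_vec_def by simp
  qed
  moreover have "\<forall>i. i \<notin> A \<longrightarrow> x i = 0" "\<forall>j. j \<notin> B \<longrightarrow> y j = 0"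
    using out[of "idx_swap b (_, j0)"] out[of "idx_swap b (i0, _)"] ij0 unfolding x_def y_def by auto
  moreover have "x i0 \<noteq> 0" "y j0 \<noteq> 0" using u0 i0 j0 unfolding x_def y_def by auto
  ultimately show ?thesis using ij0 by blast
qed

lemma segre_sub_eq_zero_set:
  assumes A: "A \<subseteq> {..2}" and B: "B \<subseteq> {..1}"
  shows "segre_sub b A B = {p \<in> Proj P7idx. \<forall>f\<in>coord_eqs b A B \<union> minor_eqs b. vanish f p}"
proof (rule set_eqI, rule iffI)
  fix p assume "p \<in> segre_sub b A B"
  then obtain x y where p: "p = pclass (segre_vec b x y)" and xy: "\<forall>i. i \<notin> A \<longrightarrow> x i = 0"
    "\<forall>j. j \<notin> B \<longrightarrow> y j = 0" and i0: "\<exists>i\<in>A. x i \<noteq> 0" and j0: "\<exists>j\<in>B. y j \<noteq> 0"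
    unfolding segre_sub_iff by blast
  have "segre_vec b x y \<noteq> (\<lambda>_. 0)" using i0 j0 A B segre_vec_nonzero by blast
  then have "p \<in> Proj P7idx" unfolding Proj_iff p using segre_vec_in_vecs by blast
  moreover have "vanish f p" if "f \<in> coord_eqs b A B \<union> minor_eqs b" for f
    using homog_segre_eqs[OF that] vanish_pclass_iff segre_eqs_vanish[OF that xy] unfolding p by blast
  ultimately show "p \<in> {p \<in> Proj P7idx. \<forall>f\<in>coord_eqs b A B \<union> minor_eqs b. vanish f p}" by blast
next
  fix p assume "p \<in> {p \<in> Proj P7idx. \<forall>f\<in>coord_eqs b A B \<union> minor_eqs b. vanish f p}"
  then obtain u where u: "u \<in> vecs P7idx" "u \<noteq> (\<lambda>_. 0)" "p = pclass u"
    and van: "\<forall>f\<in>coord_eqs b A B \<union> minor_eqs b. vanish f p" by (blast elim: ProjE)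
  have out: "u k = 0" if "idx_swap b k \<notin> A \<times> B" for k
  proof (cases "k \<in> P7idx")
    case True
    then show ?thesis using van coord_in_coord_eqs[OF True that] vanish_pclass_iff[OF homog_var[OF True]]
      unfolding u(3) by blast
  qed (use u(1) in \<open>unfold vecs_def, blast\<close>)
  have minors: "minor b i i' j j' u = 0" if "i \<le> 2" "i' \<le> 2" "j \<le> 1" "j' \<le> 1" for i i' j j'
    using van minor_in_minor_eqs[OF that] vanish_pclass_iff[OF homog_minor[OF that]] unfolding u(3) by blast
  obtain x y where "u = segre_vec b x y" "\<forall>i. i \<notin> A \<longrightarrow> x i = 0" "\<forall>j. j \<notin> B \<longrightarrow> y j = 0"
    "\<exists>i\<in>A. x i \<noteq> 0" "\<exists>j\<in>B. y j \<noteq> 0"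
    using rank_one_factorisation[OF A B u(2) out minors] by blast
  then show "p \<in> segre_sub b A B" unfolding segre_sub_iff u(3) by blast
qed

lemma segre_sub_closed:
  assumes "A \<subseteq> {..2}" "B \<subseteq> {..1}"
  shows "zariski_closed P7idx (segre_sub b A B)"
  unfolding zariski_closed_def segre_sub_eq_zero_set[OF assms]
proof (intro exI conjI)
  show "finite (coord_eqs b A B \<union> minor_eqs b)"
  proof -
    have "finite P7idx" unfolding P7idx_def by (rule finite_subset[of _ "{..2} \<times> {..2}"]) auto
    then show ?thesis unfolding coord_eqs_def minor_eqs_def by auto
  qed
qed (use homog_segre_eqs in blast)+

lemma finite_roots_affine: "a \<noteq> 0 \<Longrightarrow> finite {t :: complex. a + t * b = 0}"
  using poly_roots_finite[of "[:a, b:]"] by (simp add: algebra_simps)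

lemma segre_sub_irreducible:
  assumes A: "A \<subseteq> {..2}" "A \<noteq> {}" and B: "B \<subseteq> {..1}" "B \<noteq> {}"
  shows "zar_irreducible P7idx (segre_sub b A B)"
proof (rule zar_irreducible_if_curve_connected)
  show "segre_sub b A B \<noteq> {}" using A B segre_sub_basis_point by blast
  show "segre_sub b A B \<subseteq> Proj P7idx"
    using segre_sub_closed[OF A(1) B(1)] by (rule zariski_closed_subset_Proj)
next
  fix p1 p2 assume "p1 \<in> segre_sub b A B" "p2 \<in> segre_sub b A B"
  obtain x1 y1 i1 j1 where p1: "p1 = pclass (segre_vec b x1 y1)"
    and xy1: "\<forall>i. i \<notin> A \<longrightarrow> x1 i = 0" "\<forall>j. j \<notin> B \<longrightarrow> y1 j = 0"
    and i1: "i1 \<in> A" "x1 i1 \<noteq> 0" and j1: "j1 \<in> B" "y1 j1 \<noteq> 0"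
    using \<open>p1 \<in> segre_sub b A B\<close> unfolding segre_sub_iff by blast
  obtain x2 y2 where p2: "p2 = pclass (segre_vec b x2 y2)"
    and xy2: "\<forall>i. i \<notin> A \<longrightarrow> x2 i = 0" "\<forall>j. j \<notin> B \<longrightarrow> y2 j = 0"
    using \<open>p2 \<in> segre_sub b A B\<close> unfolding segre_sub_iff by blast
  define \<gamma> where "\<gamma> t = segre_vec b (\<lambda>i. x1 i + t * (x2 i - x1 i)) (\<lambda>j. y1 j + t * (y2 j - y1 j))" for t
  have "\<exists>P. \<forall>t. \<gamma> t k = poly P t" for k
  proof (cases "idx_swap b k \<in> Sidx")
    case True
    obtain i j where "idx_swap b k = (i, j)" by (cases "idx_swap b k")
    with True show ?thesis unfolding \<gamma>_def segre_vec_def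
      by (intro exI[of _ "[:x1 i, x2 i - x1 i:] * [:y1 j, y2 j - y1 j:]"]) (simp add: algebra_simps)
  qed (auto simp: \<gamma>_def segre_vec_def intro: exI[of _ 0])
  moreover have "\<gamma> 0 \<in> p1" "\<gamma> 1 \<in> p2" unfolding \<gamma>_def p1 p2 by (simp_all add: pclass_refl)
  moreover have "finite {t. pclass (\<gamma> t) \<notin> segre_sub b A B}"
  proof (rule finite_subset)
    show "{t. pclass (\<gamma> t) \<notin> segre_sub b A B} \<subseteq>
        {t. x1 i1 + t * (x2 i1 - x1 i1) = 0} \<union> {t. y1 j1 + t * (y2 j1 - y1 j1) = 0}"
    proof (rule subsetI, rule ccontr)
      fix t assume t: "t \<in> {t. pclass (\<gamma> t) \<notin> segre_sub b A B}"
        and "t \<notin> {t. x1 i1 + t * (x2 i1 - x1 i1) = 0} \<union> {t. y1 j1 + t * (y2 j1 - y1 j1) = 0}"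
      then have "x1 i1 + t * (x2 i1 - x1 i1) \<noteq> 0" "y1 j1 + t * (y2 j1 - y1 j1) \<noteq> 0" by auto
      then have "pclass (\<gamma> t) \<in> segre_sub b A B"
        unfolding \<gamma>_def segre_sub_iff using xy1 xy2 i1(1) j1(1)
        by (intro exI[of _ "\<lambda>i. x1 i + t * (x2 i - x1 i)"] exI[of _ "\<lambda>j. y1 j + t * (y2 j - y1 j)"]) auto
      with t show False by simp
    qed
  qed (use finite_roots_affine i1 j1 in blast)
  ultimately show "\<exists>\<gamma>. (\<forall>k. \<exists>P. \<forall>t. \<gamma> t k = poly P t) \<and> \<gamma> 0 \<in> p1 \<and> \<gamma> 1 \<in> p2 \<and>
      finite {t. pclass (\<gamma> t) \<notin> segre_sub b A B}"
    by blast
qed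

section \<open>The Segre variety and its dimension\<close>

definition segre_var :: "bool \<Rightarrow> (nat \<times> nat \<Rightarrow> complex) set set" where
  "segre_var b = {pclass (segre_vec b x y) | x y. (\<exists>i\<le>2. x i \<noteq> 0) \<and> (\<exists>j\<le>1. y j \<noteq> 0)}"

lemma segre_varE:
  assumes "p \<in> segre_var b"
  obtains x y i j where "p = pclass (segre_vec b x y)" "i \<le> 2" "x i \<noteq> 0" "j \<le> 1" "y j \<noteq> 0"
  using assms unfolding segre_var_def by blast

lemma segre_var_memI: "i \<le> 2 \<Longrightarrow> x i \<noteq> 0 \<Longrightarrow> j \<le> 1 \<Longrightarrow> y j \<noteq> 0 \<Longrightarrow> pclass (segre_vec b x y) \<in> segre_var b"
  unfolding segre_var_def by blast

lemma segre_var_eq_segre_sub: "segre_var b = segre_sub b {..2} {..1}"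
proof (rule set_eqI, rule iffI)
  fix p assume "p \<in> segre_var b"
  then obtain x y i0 j0 where p: "p = pclass (segre_vec b x y)" and
    xy: "i0 \<le> 2" "x i0 \<noteq> 0" "j0 \<le> 1" "y j0 \<noteq> 0"
    by (rule segre_varE)
  define x' where "x' i = (if i \<le> 2 then x i else 0)" for i :: nat
  define y' where "y' j = (if j \<le> 1 then y j else 0)" for j :: nat
  have "segre_vec b x y = segre_vec b x' y'" by (rule segre_vec_cong) (simp_all add: x'_def y'_def)
  then show "p \<in> segre_sub b {..2} {..1}"
    unfolding segre_sub_iff p using xy
    by (intro exI[of _ x'] exI[of _ y']) (auto simp: x'_def y'_def)
next
  fix p assume "p \<in> segre_sub b {..2} {..1}"
  then show "p \<in> segre_var b" unfolding segre_sub_iff segre_var_def by auto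
qed

lemma segre_var_closed: "zariski_closed P7idx (segre_var b)"
  unfolding segre_var_eq_segre_sub by (rule segre_sub_closed) auto

lemma segre_var_irreducible: "zar_irreducible P7idx (segre_var b)"
  unfolding segre_var_eq_segre_sub by (rule segre_sub_irreducible) auto

lemma segre_var_vecE:
  assumes "p \<in> segre_var b" "v \<in> p"
  obtains x y i0 j0 where "v = segre_vec b x y" "i0 \<le> 2" "j0 \<le> 1" "x i0 \<noteq> 0" "y j0 \<noteq> 0"
proof -
  obtain x y where "v = segre_vec b x y" "\<exists>i\<in>{..2}. x i \<noteq> 0" "\<exists>j\<in>{..1}. y j \<noteq> 0"
    using segre_sub_vecE[OF assms[unfolded segre_var_eq_segre_sub]] by metis
  with that show ?thesis by auto
qed

type_synonym expo = "nat \<times> nat \<times> nat \<times> nat \<times> nat"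

fun monomial :: "expo \<Rightarrow> (nat \<Rightarrow> complex) \<Rightarrow> (nat \<Rightarrow> complex) \<Rightarrow> complex" where
  "monomial (a0, a1, a2, b0, b1) x y = x 0 ^ a0 * x 1 ^ a1 * x 2 ^ a2 * y 0 ^ b0 * y 1 ^ b1"

fun expo_add :: "expo \<Rightarrow> expo \<Rightarrow> expo" where
  "expo_add (a0, a1, a2, b0, b1) (c0, c1, c2, d0, d1) = (a0 + c0, a1 + c1, a2 + c2, b0 + d0, b1 + d1)"

fun deg_x :: "expo \<Rightarrow> nat" where "deg_x (a0, a1, a2, b0, b1) = a0 + a1 + a2"

fun deg_y :: "expo \<Rightarrow> nat" where "deg_y (a0, a1, a2, b0, b1) = b0 + b1"

definition expo_unit :: "nat \<Rightarrow> nat \<Rightarrow> expo" where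
  "expo_unit i j = (of_bool (i = 0), of_bool (i = 1), of_bool (i = 2), of_bool (j = 0), of_bool (j = 1))"

lemma monomial_expo_add: "monomial (expo_add e1 e2) x y = monomial e1 x y * monomial e2 x y"
  by (cases e1; cases e2) (simp add: power_add algebra_simps)

lemma monomial_expo_unit:
  assumes "i \<le> 2" "j \<le> 1"
  shows "monomial (expo_unit i j) x y = x i * y j"
proof -
  have "i = 0 \<or> i = 1 \<or> i = 2" "j = 0 \<or> j = 1" using assms by arith+
  then show ?thesis unfolding expo_unit_def by (elim disjE) auto
qed

lemma monomial_scale_x: "monomial e (\<lambda>i. t * x i) y = t ^ deg_x e * monomial e x y"
  by (cases e) (simp add: power_mult_distrib power_add algebra_simps)

lemma monomial_scale_y: "monomial e x (\<lambda>j. t * y j) = t ^ deg_y e * monomial e x y"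
  by (cases e) (simp add: power_mult_distrib power_add algebra_simps)

definition eval_terms :: "(complex \<times> expo) list \<Rightarrow> (nat \<Rightarrow> complex) \<Rightarrow> (nat \<Rightarrow> complex) \<Rightarrow> complex" where
  "eval_terms L x y = (\<Sum>(c, e)\<leftarrow>L. c * monomial e x y)"

definition mult_terms :: "(complex \<times> expo) list \<Rightarrow> (complex \<times> expo) list \<Rightarrow> (complex \<times> expo) list" where
  "mult_terms L1 L2 = concat (map (\<lambda>(c1, e1). map (\<lambda>(c2, e2). (c1 * c2, expo_add e1 e2)) L2) L1)"

lemma eval_terms_simps [simp]:
  "eval_terms [] x y = 0"
  "eval_terms ((c, e) # L) x y = c * monomial e x y + eval_terms L x y"
  "eval_terms (L1 @ L2) x y = eval_terms L1 x y + eval_terms L2 x y"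
  by (simp_all add: eval_terms_def)

lemma eval_mult_terms: "eval_terms (mult_terms L1 L2) x y = eval_terms L1 x y * eval_terms L2 x y"
proof -
  have map_mult: "eval_terms (map (\<lambda>(c2, e2). (c1 * c2, expo_add e1 e2)) L) x y =
      c1 * monomial e1 x y * eval_terms L x y" for c1 e1 L
    by (induction L) (auto simp: monomial_expo_add algebra_simps)
  show ?thesis
    by (induction L1) (auto simp: mult_terms_def map_mult distrib_right)
qed

lemma polyfun_segre_terms:
  assumes "f \<in> polyfun I"
  shows "\<exists>L. \<forall>x y. f (segre_vec b x y) = eval_terms L x y"
  using assms
proof induct
  case (const c)
  show ?case by (rule exI[of _ "[(c, (0, 0, 0, 0, 0))]"]) simp
next
  case (var k)
  show ?case
  proof (cases "idx_swap b k \<in> Sidx")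
    case True
    then obtain i j where "idx_swap b k = (i, j)" "i \<le> 2" "j \<le> 1"
      by (cases "idx_swap b k") (auto simp: Sidx_iff)
    then have "\<forall>x y. segre_vec b x y k = eval_terms [(1, expo_unit i j)] x y"
      using True by (simp add: segre_vec_def monomial_expo_unit)
    then show ?thesis by blast
  next
    case False
    then have "\<forall>x y. segre_vec b x y k = eval_terms [] x y" by (simp add: segre_vec_def)
    then show ?thesis by blast
  qed
next
  case (add f g)
  then obtain L1 L2 where "\<forall>x y. f (segre_vec b x y) = eval_terms L1 x y"
    "\<forall>x y. g (segre_vec b x y) = eval_terms L2 x y" by blast
  then show ?case by (intro exI[of _ "L1 @ L2"]) simp
next
  case (mult f g)
  then obtain L1 L2 where "\<forall>x y. f (segre_vec b x y) = eval_terms L1 x y"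
    "\<forall>x y. g (segre_vec b x y) = eval_terms L2 x y" by blast
  then show ?case by (intro exI[of _ "mult_terms L1 L2"]) (simp add: eval_mult_terms)
qed

text \<open>Compare coefficients of the univariate polynomial in t obtained along the rescaling.\<close>
lemma eval_terms_homogeneous_part:
  assumes hom: "\<And>t. eval_terms L (sx t) (sy t) = t ^ d * eval_terms L x y"
    and mono: "\<And>e t. monomial e (sx t) (sy t) = t ^ deg e * monomial e x y"
  shows "eval_terms L x y = eval_terms (filter (\<lambda>(c, e). deg e = d) L) x y"
proof -
  define p where "p = (\<Sum>(c, e)\<leftarrow>L. monom (c * monomial e x y) (deg e))"
  have "poly p t = eval_terms L (sx t) (sy t)" for t
    unfolding p_def by (induction L) (auto simp: poly_monom mono algebra_simps)
  then have "poly p = poly (monom (eval_terms L x y) d)"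
    by (auto simp: hom poly_monom mult.commute)
  then have "p = monom (eval_terms L x y) d" by (simp add: poly_eq_poly_eq_iff)
  then have "coeff p d = eval_terms L x y" by simp
  moreover have "coeff p d = eval_terms (filter (\<lambda>(c, e). deg e = d) L) x y"
    unfolding p_def by (induction L) (auto simp: coeff_monom)
  ultimately show ?thesis by simp
qed

definition coeff_terms :: "(complex \<times> expo) list \<Rightarrow> expo \<Rightarrow> complex" where
  "coeff_terms L e = (\<Sum>(c, e')\<leftarrow>L. if e' = e then c else 0)"

lemma eval_terms_as_sum:
  assumes "finite M" "\<forall>(c, e)\<in>set L. e \<in> M"
  shows "eval_terms L x y = (\<Sum>e\<in>M. coeff_terms L e * monomial e x y)"
  using assms(2)
proof (induction L)
  case Nil
  then show ?case by (simp add: coeff_terms_def)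
next
  case (Cons a L)
  obtain c e0 where a: "a = (c, e0)" by (cases a)
  have "(\<Sum>e\<in>M. coeff_terms (a # L) e * monomial e x y)
      = (\<Sum>e\<in>M. (if e0 = e then c * monomial e x y else 0) + coeff_terms L e * monomial e x y)"
    unfolding a coeff_terms_def by (intro sum.cong) (auto simp: algebra_simps)
  also have "\<dots> = c * monomial e0 x y + (\<Sum>e\<in>M. coeff_terms L e * monomial e x y)"
    using assms(1) Cons.prems a by (simp add: sum.distrib)
  finally show ?case using Cons a by simp
qed

definition bidegree_expos :: "nat \<Rightarrow> expo set" where
  "bidegree_expos d = {e. deg_x e = d \<and> deg_y e = d}"

lemma bidegree_expos_subset:
  "bidegree_expos d \<subseteq> (\<lambda>(a0, a1, b0). (a0, a1, d - a0 - a1, b0, d - b0)) ` ({..d} \<times> {..d} \<times> {..d})"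
proof
  fix e assume "e \<in> bidegree_expos d"
  then obtain a0 a1 a2 b0 b1 where e: "e = (a0, a1, a2, b0, b1)" "a0 + a1 + a2 = d" "b0 + b1 = d"
    unfolding bidegree_expos_def by (cases e) auto
  then show "e \<in> (\<lambda>(a0, a1, b0). (a0, a1, d - a0 - a1, b0, d - b0)) ` ({..d} \<times> {..d} \<times> {..d})"
    by (intro rev_image_eqI[of "(a0, a1, b0)"]) auto
qed

lemma finite_bidegree_expos: "finite (bidegree_expos d)"
  using bidegree_expos_subset by (rule finite_subset) auto

lemma card_bidegree_expos: "card (bidegree_expos d) \<le> (d + 1) ^ 3"
proof -
  have "card (bidegree_expos d) \<le>
      card ((\<lambda>(a0, a1, b0). (a0, a1, d - a0 - a1, b0, d - b0)) ` ({..d} \<times> {..d} \<times> {..d}))"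
    by (rule card_mono[OF _ bidegree_expos_subset]) auto
  also have "\<dots> \<le> card ({..d} \<times> {..d} \<times> {..d})" by (rule card_image_le) auto
  also have "\<dots> = (d + 1) ^ 3" by (simp add: card_cartesian_product power3_eq_cube)
  finally show ?thesis .
qed

lemma homog_segre_expansion:
  assumes "homog P7idx d f"
  shows "\<exists>c. \<forall>x y. f (segre_vec b x y) = (\<Sum>e\<in>bidegree_expos d. c e * monomial e x y)"
proof -
  obtain L where L: "\<And>x y. f (segre_vec b x y) = eval_terms L x y"
    using polyfun_segre_terms assms unfolding homog_def by blast
  have scale: "f (segre_vec b (\<lambda>i. t * x i) y) = t ^ d * f (segre_vec b x y)"
    "f (segre_vec b x (\<lambda>j. t * y j)) = t ^ d * f (segre_vec b x y)" for t x y
    unfolding segre_vec_smult_left segre_vec_smult_right by (simp_all add: homog_scale[OF assms])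
  define L' where "L' = filter (\<lambda>(c, e). deg_y e = d) (filter (\<lambda>(c, e). deg_x e = d) L)"
  have "f (segre_vec b x y) = eval_terms L' x y" for x y
  proof -
    have 1: "eval_terms L x y = eval_terms (filter (\<lambda>(c, e). deg_x e = d) L) x y" for x y
      by (rule eval_terms_homogeneous_part[where sx = "\<lambda>t i. t * x i" and sy = "\<lambda>t. y"])
        (simp_all add: L[symmetric] scale monomial_scale_x)
    show ?thesis unfolding L'_def L 1
      by (rule eval_terms_homogeneous_part[where sx = "\<lambda>t. x" and sy = "\<lambda>t j. t * y j"])
        (simp_all add: L[symmetric] 1[symmetric] scale monomial_scale_y)
  qed
  moreover have "\<forall>(c, e)\<in>set L'. e \<in> bidegree_expos d" unfolding L'_def bidegree_expos_def by auto
  ultimately have "\<forall>x y. f (segre_vec b x y) = (\<Sum>e\<in>bidegree_expos d. coeff_terms L' e * monomial e x y)"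
    using eval_terms_as_sum[OF finite_bidegree_expos] by simp
  then show ?thesis by (rule exI[of _ "coeff_terms L'"])
qed

text \<open>Restricted to the Segre variety, forms of degree d become polynomials of bidegree (d, d)
  in x and y, so at most (d + 1)^3 of them can be independent.\<close>
lemma indep_forms_segre_var_le:
  assumes "indep_forms P7idx (segre_var b) d n"
  shows "n \<le> (d + 1) ^ 3"
proof (rule ccontr)
  assume "\<not> n \<le> (d + 1) ^ 3"
  then have card: "card (bidegree_expos d) < card {..<n}" using card_bidegree_expos[of d] by simp
  obtain fs where hom: "\<forall>i<n. homog P7idx d (fs i)"
    and ind: "\<forall>a. (\<forall>p\<in>segre_var b. \<forall>v\<in>p. (\<Sum>i<n. a i * fs i v) = 0) \<longrightarrow> (\<forall>i<n. a i = 0)"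
    using assms unfolding indep_forms_def by blast
  have "\<forall>i\<in>{..<n}. \<exists>c. \<forall>x y. fs i (segre_vec b x y) = (\<Sum>e\<in>bidegree_expos d. c e * monomial e x y)"
    using hom homog_segre_expansion by blast
  from bchoice[OF this] obtain k
    where "\<forall>i\<in>{..<n}. \<forall>x y. fs i (segre_vec b x y) = (\<Sum>e\<in>bidegree_expos d. k i e * monomial e x y)"
    by blast
  then have k: "i < n \<Longrightarrow> fs i (segre_vec b x y) = (\<Sum>e\<in>bidegree_expos d. k i e * monomial e x y)" for i x y
    by blast
  obtain a where a: "\<exists>i\<in>{..<n}. a i \<noteq> 0" "\<forall>e\<in>bidegree_expos d. (\<Sum>i\<in>{..<n}. a i * k i e) = 0"
    using underdetermined_system_nontrivial_solution[OF finite_bidegree_expos finite_lessThan card] by blast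
  have "(\<Sum>i<n. a i * fs i v) = 0" if pv: "p \<in> segre_var b" "v \<in> p" for p v
  proof -
    obtain x y where v: "v = segre_vec b x y" using segre_var_vecE[OF pv] by blast
    have "(\<Sum>i<n. a i * fs i v) = (\<Sum>i<n. a i * (\<Sum>e\<in>bidegree_expos d. k i e * monomial e x y))"
      unfolding v by (intro sum.cong) (auto simp: k)
    also have "\<dots> = (\<Sum>e\<in>bidegree_expos d. (\<Sum>i<n. a i * k i e) * monomial e x y)"
      by (simp add: sum_distrib_left sum_distrib_right mult.assoc sum.swap[of _ "{..<n}"])
    also have "\<dots> = 0" using a(2) by simp
    finally show ?thesis .
  qed
  then show False using ind a(1) by blast
qed

lemma zar_dim_segre_var: "zar_dim P7idx (segre_var b) = 3"
proof (rule zar_dim_eqI)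
  define Z where "Z k = (if k \<le> 2 then segre_sub b {..k} {0} else segre_sub b {..2} {..1})" for k :: nat
  let ?e = "\<lambda>i k. if k = i then 1 else 0 :: complex"
  have "\<exists>A B. Z k = segre_sub b A B \<and> A \<subseteq> {..2} \<and> A \<noteq> {} \<and> B \<subseteq> {..1} \<and> B \<noteq> {}" for k
    unfolding Z_def by (cases "k \<le> 2") auto
  then show "\<forall>k\<le>3. Z k \<subseteq> segre_var b \<and> zariski_closed P7idx (Z k) \<and> zar_irreducible P7idx (Z k)"
    unfolding segre_var_eq_segre_sub
    by (metis segre_sub_mono segre_sub_closed segre_sub_irreducible)
  have "Z k \<subset> Z (Suc k)" if "k < 3" for k
  proof -
    have "Z k \<subseteq> Z (Suc k)" unfolding Z_def by (simp add: segre_sub_mono)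
    moreover have "pclass (segre_vec b (?e (Suc k)) (?e 0)) \<in> Z (Suc k) - Z k" if "k < 2"
      unfolding Z_def using that segre_sub_basis_point segre_sub_basis_point_notin by auto
    moreover have "pclass (segre_vec b (?e 0) (?e 1)) \<in> Z 3 - Z 2"
      unfolding Z_def using segre_sub_basis_point segre_sub_basis_point_notin by auto
    ultimately show ?thesis using \<open>k < 3\<close> by (metis Diff_iff less_Suc_eq numeral_3_eq_3 numeral_2_eq_2 psubsetI)
  qed
  then show "\<forall>k<3. Z k \<subset> Z (Suc k)" by blast
qed (rule indep_forms_segre_var_le)

section \<open>Smoothness and biregularity\<close>

lemma partial_fn_coord: "partial_fn (\<lambda>w. w a) i v = of_bool (a = i)"
proof -
  have "((\<lambda>t. v a + of_bool (a = i) * t) has_field_derivative of_bool (a = i)) (at 0)"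
    by (auto intro!: derivative_eq_intros)
  then show ?thesis
    unfolding partial_fn_def by (simp add: DERIV_imp_deriv mult.commute)
qed

lemma partial_fn_quadric:
  "partial_fn (\<lambda>w. w a * w a' - w c * w c') i v =
     of_bool (a = i) * v a' + v a * of_bool (a' = i) - (of_bool (c = i) * v c' + v c * of_bool (c' = i))"
proof -
  have upd: "(v(i := v i + t)) k = v k + of_bool (k = i) * t" for k t by simp
  have "((\<lambda>t. (v a + of_bool (a = i) * t) * (v a' + of_bool (a' = i) * t)
        - (v c + of_bool (c = i) * t) * (v c' + of_bool (c' = i) * t))
      has_field_derivative
        (of_bool (a = i) * v a' + v a * of_bool (a' = i) - (of_bool (c = i) * v c' + v c * of_bool (c' = i))))
      (at 0)"
    by (auto intro!: derivative_eq_intros simp: algebra_simps)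
  then show ?thesis unfolding partial_fn_def upd by (rule DERIV_imp_deriv)
qed

lemma partial_fn_minor:
  "partial_fn (minor b i i' j j') col v =
     of_bool (idx_swap b (i, j) = col) * v (idx_swap b (i', j')) + v (idx_swap b (i, j)) * of_bool (idx_swap b (i', j') = col)
     - (of_bool (idx_swap b (i, j') = col) * v (idx_swap b (i', j)) + v (idx_swap b (i, j')) * of_bool (idx_swap b (i', j) = col))"
  unfolding minor_def[abs_def] by (rule partial_fn_quadric)

text \<open>Near a point with v (i0, j0) \<noteq> 0, the Segre variety is cut out by the two coordinates
  outside the 3 \<times> 2 block and the two minors through the entry (i0, j0); their gradients are
  independent, as seen on the coordinates (0, 2), (1, 2), (i1, j1) and (i2, j1).\<close>
definition segre_local_eqs :: "bool \<Rightarrow> nat \<Rightarrow> nat \<Rightarrow> nat \<Rightarrow> nat \<Rightarrow> ((nat \<times> nat \<Rightarrow> complex) \<Rightarrow> complex) list" where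
  "segre_local_eqs b i0 i1 i2 j0 =
     [\<lambda>w. w (idx_swap b (0, 2)), \<lambda>w. w (idx_swap b (1, 2)), minor b i0 i1 j0 (1 - j0), minor b i0 i2 j0 (1 - j0)]"

lemma segre_local_eqs_vanishing:
  assumes "i0 \<le> 2" "i1 \<le> 2" "i2 \<le> 2" "j0 \<le> 1"
  shows "set (segre_local_eqs b i0 i1 i2 j0) \<subseteq> vanishing_homog P7idx (segre_var b)"
proof
  fix f assume f: "f \<in> set (segre_local_eqs b i0 i1 i2 j0)"
  have "idx_swap b (0, 2) \<in> P7idx" "idx_swap b (1, 2) \<in> P7idx" by (auto simp: P7idx_iff)
  then have eqs: "f \<in> coord_eqs b {..2} {..1} \<union> minor_eqs b"
    using f assms by (auto simp: segre_local_eqs_def intro!: coord_in_coord_eqs minor_in_minor_eqs)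
  have "vanish f p" if "p \<in> segre_var b" for p
  proof -
    have "p \<in> segre_sub b {..2} {..1}" using that unfolding segre_var_eq_segre_sub .
    then show ?thesis using eqs unfolding segre_sub_eq_zero_set[OF order.refl order.refl] by blast
  qed
  then show "f \<in> vanishing_homog P7idx (segre_var b)"
    unfolding vanishing_homog_def using homog_segre_eqs[OF eqs] by blast
qed

lemma segre_local_eqs_jacobian:
  assumes i: "i0 \<le> 2" "i1 \<le> 2" "i2 \<le> 2" "i0 \<noteq> i1" "i0 \<noteq> i2" "i1 \<noteq> i2" and j0: "j0 \<le> 1"
    and v0: "v (idx_swap b (i0, j0)) \<noteq> 0"
    and H: "\<forall>col\<in>P7idx. (\<Sum>k<4. c k * partial_fn (segre_local_eqs b i0 i1 i2 j0 ! k) col v) = 0"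
  shows "\<forall>k<4. c k = 0"
proof -
  have H': "c 0 * partial_fn (\<lambda>w. w (idx_swap b (0, 2))) col v + c 1 * partial_fn (\<lambda>w. w (idx_swap b (1, 2))) col v
      + c 2 * partial_fn (minor b i0 i1 j0 (1 - j0)) col v + c 3 * partial_fn (minor b i0 i2 j0 (1 - j0)) col v = 0"
    if "col \<in> P7idx" for col
    using H that by (simp add: segre_local_eqs_def eval_nat_numeral)
  have cols: "idx_swap b (0, 2) \<in> P7idx" "idx_swap b (1, 2) \<in> P7idx"
    "idx_swap b (i1, 1 - j0) \<in> P7idx" "idx_swap b (i2, 1 - j0) \<in> P7idx"
    using i j0 by (auto simp: P7idx_iff)
  have j: "j0 \<noteq> 2" "1 - j0 \<noteq> 2" "1 - j0 \<noteq> j0" using j0 by arith+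
  have "c 0 = 0" using H'[OF cols(1)] j by (simp add: partial_fn_coord partial_fn_minor)
  moreover have "c 1 = 0" using H'[OF cols(2)] j by (simp add: partial_fn_coord partial_fn_minor)
  moreover have "c 2 * v (idx_swap b (i0, j0)) = 0"
    using H'[OF cols(3)] i(4,5,6) j by (simp add: partial_fn_coord partial_fn_minor)
  moreover have "c 3 * v (idx_swap b (i0, j0)) = 0"
    using H'[OF cols(4)] i(4,5,6) j by (simp add: partial_fn_coord partial_fn_minor)
  ultimately show ?thesis using v0 by (auto simp: less_Suc_eq numeral_eq_Suc)
qed

lemma segre_var_smooth: "zar_smooth P7idx (segre_var b)"
  unfolding zar_smooth_def zar_dim_segre_var card_P7idx
proof (intro ballI)
  fix p v assume "p \<in> segre_var b" "v \<in> p"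
  then obtain x y i0 j0 where xy: "v = segre_vec b x y" "i0 \<le> 2" "j0 \<le> 1" "x i0 \<noteq> 0" "y j0 \<noteq> 0"
    by (rule segre_var_vecE)
  define i1 where "i1 = (if i0 = 0 then 1 else 0 :: nat)"
  define i2 where "i2 = (if i0 = 2 then 1 else 2 :: nat)"
  have i: "i0 \<le> 2" "i1 \<le> 2" "i2 \<le> 2" "i0 \<noteq> i1" "i0 \<noteq> i2" "i1 \<noteq> i2"
    unfolding i1_def i2_def using xy(2) by auto
  have v0: "v (idx_swap b (i0, j0)) \<noteq> 0" using xy segre_vec_at[of i0 j0 b x y] by (simp add: Sidx_iff)
  let ?fs = "segre_local_eqs b i0 i1 i2 j0"
  have len: "length ?fs = 4" by (simp add: segre_local_eqs_def)
  have "length ?fs = 8 - 1 - 3 \<and> set ?fs \<subseteq> vanishing_homog P7idx (segre_var b) \<and>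
      (\<forall>c. (\<forall>i\<in>P7idx. (\<Sum>k<length ?fs. c k * partial_fn (?fs ! k) i v) = 0) \<longrightarrow> (\<forall>k<length ?fs. c k = 0))"
    unfolding len using segre_local_eqs_vanishing[OF i(1-3) xy(3)]
      segre_local_eqs_jacobian[where v = v, OF i xy(3) v0] by simp
  then show "\<exists>fs. length fs = 8 - 1 - 3 \<and> set fs \<subseteq> vanishing_homog P7idx (segre_var b) \<and>
      (\<forall>c. (\<forall>i\<in>P7idx. (\<Sum>k<length fs. c k * partial_fn (fs ! k) i v) = 0) \<longrightarrow> (\<forall>k<length fs. c k = 0))"
    by blast
qed

lemma regular_mapI_global:
  assumes "X \<subseteq> Proj I" "\<phi> ` X \<subseteq> Proj J" "\<forall>j\<in>J. homog I d (g j)"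
    and "\<And>q v. q \<in> X \<Longrightarrow> v \<in> q \<Longrightarrow>
      (\<lambda>j. if j \<in> J then g j v else 0) \<noteq> (\<lambda>_. 0) \<and> \<phi> q = pclass (\<lambda>j. if j \<in> J then g j v else 0)"
  shows "regular_map I J X \<phi>"
  unfolding regular_map_def
proof (intro conjI ballI)
  fix p assume "p \<in> X"
  show "\<exists>U g d. zariski_open_in I X U \<and> p \<in> U \<and> (\<forall>j\<in>J. homog I d (g j)) \<and>
      (\<forall>q\<in>U. \<forall>v\<in>q. (\<lambda>j. if j \<in> J then g j v else 0) \<noteq> (\<lambda>_. 0) \<and>
        \<phi> q = pclass (\<lambda>j. if j \<in> J then g j v else 0))"
    using zariski_open_in_self \<open>p \<in> X\<close> assms(3,4) by (intro exI[of _ X] exI[of _ g] exI[of _ d]) blast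
qed (use assms(1,2) in auto)

text \<open>Both Segre embeddings differ by a permutation of coordinates, which gives the isomorphism
  and its inverse; a representative of a class is chosen with SOME.\<close>
definition segre_map :: "bool \<Rightarrow> (nat \<times> nat \<Rightarrow> complex) set \<Rightarrow> (nat \<times> nat \<Rightarrow> complex) set" where
  "segre_map b q = pclass (\<lambda>k. if k \<in> P7idx \<and> idx_swap b k \<in> Sidx then (SOME v. v \<in> q) (idx_swap b k) else 0)"

definition segre_map_inv :: "bool \<Rightarrow> (nat \<times> nat \<Rightarrow> complex) set \<Rightarrow> (nat \<times> nat \<Rightarrow> complex) set" where
  "segre_map_inv b q = pclass (\<lambda>k. if k \<in> Sidx then (SOME v. v \<in> q) (idx_swap b k) else 0)"

lemma segre_P2P1_eq: "segre_P2P1 = segre_var False"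
proof -
  have "(\<lambda>(i, j). if (i, j) \<in> Sidx then x i * y j else 0) = segre_vec False x y" for x y
    by (auto simp: segre_vec_def idx_swap_def fun_eq_iff)
  then show ?thesis unfolding segre_P2P1_def segre_var_def by simp
qed

lemma segre_var_Proj_Sidx: "segre_var False \<subseteq> Proj Sidx"
proof
  fix p assume "p \<in> segre_var False"
  then obtain x y i0 j0 where p: "p = pclass (segre_vec False x y)" "i0 \<le> 2" "x i0 \<noteq> 0" "j0 \<le> 1" "y j0 \<noteq> 0"
    unfolding segre_var_def by blast
  have "segre_vec False x y \<in> vecs Sidx" unfolding vecs_def segre_vec_def idx_swap_def by simp
  then show "p \<in> Proj Sidx" unfolding Proj_iff p(1) using segre_vec_nonzero p by blast
qed

lemma segre_var_Proj_P7idx: "segre_var b \<subseteq> Proj P7idx"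
  by (rule zariski_closed_subset_Proj[OF segre_var_closed])

lemma segre_map_segre_vec:
  "segre_map b (pclass (segre_vec False x y)) = pclass (segre_vec b x y)"
  "segre_map_inv b (pclass (segre_vec b x y)) = pclass (segre_vec False x y)"
proof -
  obtain c where c: "c \<noteq> 0" "(SOME v. v \<in> pclass (segre_vec False x y)) = (\<lambda>k. c * segre_vec False x y k)"
    using some_in_pclass by blast
  have "(\<lambda>k. if k \<in> P7idx \<and> idx_swap b k \<in> Sidx then c * segre_vec False x y (idx_swap b k) else 0)
      = (\<lambda>k. c * segre_vec b x y k)"
    by (auto simp: fun_eq_iff segre_vec_def idx_swap_def dest: idx_swap_Sidx_in_P7idx[of _ b])
  then show "segre_map b (pclass (segre_vec False x y)) = pclass (segre_vec b x y)"
    unfolding segre_map_def c(2) using pclass_smult[OF c(1), of "segre_vec b x y"] by simp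
next
  obtain c where c: "c \<noteq> 0" "(SOME v. v \<in> pclass (segre_vec b x y)) = (\<lambda>k. c * segre_vec b x y k)"
    using some_in_pclass by blast
  have "(\<lambda>k. if k \<in> Sidx then c * segre_vec b x y (idx_swap b k) else 0) = (\<lambda>k. c * segre_vec False x y k)"
    by (auto simp: fun_eq_iff segre_vec_def idx_swap_def)
  then show "segre_map_inv b (pclass (segre_vec b x y)) = pclass (segre_vec False x y)"
    unfolding segre_map_inv_def c(2) using pclass_smult[OF c(1), of "segre_vec False x y"] by simp
qed

lemma segre_map_in_segre_var: "p \<in> segre_var False \<Longrightarrow> segre_map b p \<in> segre_var b"
  by (metis segre_varE segre_var_memI segre_map_segre_vec(1))

lemma segre_map_inv_in_segre_var: "p \<in> segre_var b \<Longrightarrow> segre_map_inv b p \<in> segre_var False"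
  by (metis segre_varE segre_var_memI segre_map_segre_vec(2))

lemma segre_map_inv_segre_map: "p \<in> segre_var False \<Longrightarrow> segre_map_inv b (segre_map b p) = p"
  by (auto elim!: segre_varE simp: segre_map_segre_vec)

lemma segre_map_segre_map_inv: "p \<in> segre_var b \<Longrightarrow> segre_map b (segre_map_inv b p) = p"
  by (auto elim!: segre_varE simp: segre_map_segre_vec)

lemma bij_betw_segre_map: "bij_betw (segre_map b) (segre_var False) (segre_var b)"
  by (rule bij_betw_byWitness[where f' = "segre_map_inv b"])
    (auto simp: segre_map_in_segre_var segre_map_inv_in_segre_var segre_map_inv_segre_map
      segre_map_segre_map_inv)

lemma regular_map_segre_map: "regular_map Sidx P7idx (segre_var False) (segre_map b)"
proof (rule regular_mapI_global[where g = "\<lambda>k v. if idx_swap b k \<in> Sidx then v (idx_swap b k) else 0" and d = 1])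
  show "segre_map b ` segre_var False \<subseteq> Proj P7idx"
    using bij_betw_segre_map segre_var_Proj_P7idx by (metis bij_betw_def)
  fix q v assume "q \<in> segre_var False" "v \<in> q"
  obtain x y i0 j0 where q: "q = pclass (segre_vec False x y)" "i0 \<le> 2" "x i0 \<noteq> 0" "j0 \<le> 1" "y j0 \<noteq> 0"
    using \<open>q \<in> segre_var False\<close> by (rule segre_varE)
  obtain c where c: "c \<noteq> 0" "v = (\<lambda>k. c * segre_vec False x y k)"
    using \<open>v \<in> q\<close> unfolding q(1) pclass_iff by blast
  have eq: "(\<lambda>k. if k \<in> P7idx then if idx_swap b k \<in> Sidx then v (idx_swap b k) else 0 else 0)
      = (\<lambda>k. c * segre_vec b x y k)"
    unfolding c(2) by (auto simp: fun_eq_iff segre_vec_def idx_swap_def dest: idx_swap_Sidx_in_P7idx[of _ b])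
  then show "(\<lambda>k. if k \<in> P7idx then if idx_swap b k \<in> Sidx then v (idx_swap b k) else 0 else 0) \<noteq> (\<lambda>_. 0) \<and>
      segre_map b q = pclass (\<lambda>k. if k \<in> P7idx then if idx_swap b k \<in> Sidx then v (idx_swap b k) else 0 else 0)"
    unfolding eq q(1) segre_map_segre_vec pclass_smult[OF c(1)]
    using smult_vec_nonzero[OF c(1) segre_vec_nonzero[where x = x and y = y, OF q(2,4,3,5)]] by simp
next
  show "\<forall>k\<in>P7idx. homog Sidx 1 (\<lambda>v. if idx_swap b k \<in> Sidx then v (idx_swap b k) else 0)"
  proof
    fix k
    show "homog Sidx 1 (\<lambda>v. if idx_swap b k \<in> Sidx then v (idx_swap b k) else 0)"
    proof (cases "idx_swap b k \<in> Sidx")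
      case True
      then show ?thesis using homog_var[OF True] by simp
    qed (simp add: homog_zero)
  qed
qed (rule segre_var_Proj_Sidx)

lemma the_inv_into_segre_map:
  "q \<in> segre_var b \<Longrightarrow> the_inv_into (segre_var False) (segre_map b) q = segre_map_inv b q"
  using bij_betw_segre_map[of b, THEN bij_betw_imp_inj_on]
  by (intro the_inv_into_f_eq) (simp_all add: segre_map_segre_map_inv segre_map_inv_in_segre_var)

lemma regular_map_segre_map_inv:
  "regular_map P7idx Sidx (segre_var b) (the_inv_into (segre_var False) (segre_map b))"
proof (rule regular_mapI_global[where g = "\<lambda>k v. v (idx_swap b k)" and d = 1])
  show "the_inv_into (segre_var False) (segre_map b) ` segre_var b \<subseteq> Proj Sidx"
    using bij_betw_the_inv_into[OF bij_betw_segre_map] segre_var_Proj_Sidx by (metis bij_betw_def)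
  fix q v assume "q \<in> segre_var b" "v \<in> q"
  obtain x y i0 j0 where q: "q = pclass (segre_vec b x y)" "i0 \<le> 2" "x i0 \<noteq> 0" "j0 \<le> 1" "y j0 \<noteq> 0"
    using \<open>q \<in> segre_var b\<close> by (rule segre_varE)
  obtain c where c: "c \<noteq> 0" "v = (\<lambda>k. c * segre_vec b x y k)"
    using \<open>v \<in> q\<close> unfolding q(1) pclass_iff by blast
  have eq: "(\<lambda>k. if k \<in> Sidx then v (idx_swap b k) else 0) = (\<lambda>k. c * segre_vec False x y k)"
    unfolding c(2) by (auto simp: fun_eq_iff segre_vec_def idx_swap_def)
  then show "(\<lambda>k. if k \<in> Sidx then v (idx_swap b k) else 0) \<noteq> (\<lambda>_. 0) \<and>
      the_inv_into (segre_var False) (segre_map b) q = pclass (\<lambda>k. if k \<in> Sidx then v (idx_swap b k) else 0)"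
    unfolding eq the_inv_into_segre_map[OF \<open>q \<in> segre_var b\<close>] unfolding q(1) segre_map_segre_vec pclass_smult[OF c(1)]
    using smult_vec_nonzero[OF c(1) segre_vec_nonzero[where x = x and y = y, OF q(2,4,3,5)]] by simp
next
  show "\<forall>k\<in>Sidx. homog P7idx 1 (\<lambda>v. v (idx_swap b k))"
    using homog_var[OF idx_swap_Sidx_in_P7idx] by blast
qed (rule segre_var_Proj_P7idx)

lemma segre_var_biregular: "biregular Sidx P7idx segre_P2P1 (segre_var b) (segre_map b)"
  unfolding biregular_def segre_P2P1_eq
  using bij_betw_segre_map regular_map_segre_map regular_map_segre_map_inv by blast

section \<open>The two varieties of cubics\<close>

lemma quadratic_poly_splits: "\<exists>c1 a1 c2 a2. [:x0, x1, x2 :: complex:] = [:c1, a1:] * [:c2, a2:]"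
proof (cases "x2 = 0")
  case True
  then show ?thesis by (intro exI[of _ x0] exI[of _ x1] exI[of _ 1] exI[of _ 0]) simp
next
  case False
  define d where "d = csqrt (x1\<^sup>2 - 4 * x0 * x2)"
  have "d\<^sup>2 = x1\<^sup>2 - 4 * x0 * x2" unfolding d_def by simp
  then have "(x1 - d) / 2 * ((x1 + d) / (2 * x2)) = x0"
    using False by (simp add: field_simps power2_eq_square)
  moreover have "(x1 - d) / 2 + x2 * ((x1 + d) / (2 * x2)) = x1" using False by (simp add: field_simps)
  ultimately show ?thesis
    by (intro exI[of _ "(x1 - d) / 2"] exI[of _ x2] exI[of _ "(x1 + d) / (2 * x2)"] exI[of _ 1]) simp
qed

lemma nonzero_poly_coeff_le_degree:
  assumes "p \<noteq> 0" "degree p \<le> n"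
  shows "\<exists>i\<le>n. coeff p i \<noteq> 0"
  using assms leading_coeff_neq_0 by blast

lemma degree_linear_le: "degree [:a, b:] \<le> 1"
  using degree_pCons_le[of a "[:b:]"] by simp

lemma degree_quadratic_le: "degree [:a, b, c:] \<le> 2"
  using degree_pCons_le[of a "[:b, c:]"] degree_pCons_le[of b "[:c:]"] by simp

lemma coeff_linear: "coeff [:a, b:] j = (if j = 0 then a else if j = 1 then b else 0)"
  by (auto simp: coeff_pCons split: nat.split)

lemma coeff_quadratic: "coeff [:a, b, c:] j = (if j = 0 then a else if j = 1 then b else if j = 2 then c else 0)"
  by (auto simp: coeff_pCons split: nat.split)

lemma coeffvec_linear_in_w:
  "coeffvec [:smult c Q, smult b Q:] = segre_vec False (coeff Q) (coeff [:c, b:])"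
proof
  fix k :: "nat \<times> nat"
  obtain i j where k: "k = (i, j)" by (cases k)
  show "coeffvec [:smult c Q, smult b Q:] k = segre_vec False (coeff Q) (coeff [:c, b:]) k"
    unfolding k coeffvec_def segre_vec_def idx_swap_def
    by (auto simp: coeff_linear P7idx_iff Sidx_iff)
qed

lemma coeffvec_quadratic_in_w:
  "coeffvec [:smult m0 [:l0, l1:], smult m1 [:l0, l1:], smult m2 [:l0, l1:]:] =
     segre_vec True (coeff [:m0, m1, m2:]) (coeff [:l0, l1:])"
proof
  fix k :: "nat \<times> nat"
  obtain i j where k: "k = (i, j)" by (cases k)
  show "coeffvec [:smult m0 [:l0, l1:], smult m1 [:l0, l1:], smult m2 [:l0, l1:]:] k =
      segre_vec True (coeff [:m0, m1, m2:]) (coeff [:l0, l1:]) k"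
    unfolding k coeffvec_def segre_vec_def idx_swap_def
    by (auto simp: coeff_linear coeff_quadratic P7idx_iff Sidx_iff)
qed

lemma D_11_0_1_product:
  "[:[:c1, a1:]:] * [:[:c2, a2:]:] * [:[:c3:], [:b3:]:] =
     [:smult c3 ([:c1, a1:] * [:c2, a2 :: complex:]), smult b3 ([:c1, a1:] * [:c2, a2:]):]"
  by (simp add: algebra_simps)

lemma D_1_0_11_product:
  "[:[:c1, a1:]:] * [:[:c2:], [:b2:]:] * [:[:c3:], [:b3:]:] =
     [:smult (c2 * c3) [:c1, a1 :: complex:], smult (c2 * b3 + b2 * c3) [:c1, a1:], smult (b2 * b3) [:c1, a1:]:]"
  by (simp add: algebra_simps)

lemma D_11_0_1_eq_segre_var: "D_11_0_1 = segre_var False"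
proof (rule set_eqI, rule iffI)
  fix p assume "p \<in> D_11_0_1"
  then obtain a1 c1 a2 c2 b3 c3 where p: "p = pclass (coeffvec ([:[:c1, a1:]:] * [:[:c2, a2:]:] * [:[:c3:], [:b3:]:]))"
    and nz: "[:[:c1, a1:]:] * [:[:c2, a2:]:] * [:[:c3:], [:b3:]:] \<noteq> 0"
    unfolding D_11_0_1_def by blast
  define Q where "Q = [:c1, a1:] * [:c2, a2:]"
  have "Q \<noteq> 0" "[:c3, b3:] \<noteq> 0" using nz unfolding Q_def D_11_0_1_product by auto
  moreover have "degree Q \<le> 2" unfolding Q_def by (rule order.trans[OF degree_mult_le]) simp
  ultimately obtain i j where "i \<le> 2" "coeff Q i \<noteq> 0" "j \<le> 1" "coeff [:c3, b3:] j \<noteq> 0"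
    using nonzero_poly_coeff_le_degree degree_linear_le by meson
  then show "p \<in> segre_var False"
    unfolding p D_11_0_1_product Q_def[symmetric] coeffvec_linear_in_w by (rule segre_var_memI)
next
  fix p assume "p \<in> segre_var False"
  then obtain x y i0 j0 where p: "p = pclass (segre_vec False x y)" "i0 \<le> 2" "x i0 \<noteq> 0" "j0 \<le> 1" "y j0 \<noteq> 0"
    by (rule segre_varE)
  obtain c1 a1 c2 a2 where Q: "[:x 0, x 1, x 2:] = [:c1, a1:] * [:c2, a2:]"
    using quadratic_poly_splits by blast
  define P where "P = [:[:c1, a1:]:] * [:[:c2, a2:]:] * [:[:y 0:], [:y 1:]:]"
  have "segre_vec False x y = segre_vec False (coeff [:x 0, x 1, x 2:]) (coeff [:y 0, y 1:])"
    by (rule segre_vec_cong) (auto simp: coeff_quadratic coeff_linear le_Suc_eq numeral_eq_Suc)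
  then have cv: "coeffvec P = segre_vec False x y"
    unfolding P_def D_11_0_1_product Q[symmetric] coeffvec_linear_in_w by simp
  have "[:x 0, x 1, x 2:] \<noteq> 0" "[:y 0, y 1:] \<noteq> 0"
    using p(2-5) by (auto simp: le_Suc_eq numeral_eq_Suc)
  then have "P \<noteq> 0" unfolding P_def D_11_0_1_product Q[symmetric] by (simp; blast)
  then show "p \<in> D_11_0_1" unfolding D_11_0_1_def p(1) cv[symmetric] P_def by blast
qed

lemma D_1_0_11_eq_segre_var: "D_1_0_11 = segre_var True"
proof (rule set_eqI, rule iffI)
  fix p assume "p \<in> D_1_0_11"
  then obtain a1 c1 b2 c2 b3 c3 where p: "p = pclass (coeffvec ([:[:c1, a1:]:] * [:[:c2:], [:b2:]:] * [:[:c3:], [:b3:]:]))"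
    and nz: "[:[:c1, a1:]:] * [:[:c2:], [:b2:]:] * [:[:c3:], [:b3:]:] \<noteq> 0"
    unfolding D_1_0_11_def by blast
  have "[:c2 * c3, c2 * b3 + b2 * c3, b2 * b3:] \<noteq> 0" "[:c1, a1:] \<noteq> 0"
    using nz unfolding D_1_0_11_product by auto
  then obtain i j where "i \<le> 2" "coeff [:c2 * c3, c2 * b3 + b2 * c3, b2 * b3:] i \<noteq> 0"
      "j \<le> 1" "coeff [:c1, a1:] j \<noteq> 0"
    using nonzero_poly_coeff_le_degree degree_linear_le degree_quadratic_le by meson
  then show "p \<in> segre_var True"
    unfolding p D_1_0_11_product coeffvec_quadratic_in_w by (rule segre_var_memI)
next
  fix p assume "p \<in> segre_var True"
  then obtain x y i0 j0 where p: "p = pclass (segre_vec True x y)" "i0 \<le> 2" "x i0 \<noteq> 0" "j0 \<le> 1" "y j0 \<noteq> 0"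
    by (rule segre_varE)
  obtain c2 b2 c3 b3 where M: "[:x 0, x 1, x 2:] = [:c2, b2:] * [:c3, b3:]"
    using quadratic_poly_splits by blast
  then have m: "x 0 = c2 * c3" "x 1 = c2 * b3 + b2 * c3" "x 2 = b2 * b3" by (simp_all add: algebra_simps)
  define P where "P = [:[:y 0, y 1:]:] * [:[:c2:], [:b2:]:] * [:[:c3:], [:b3:]:]"
  have "segre_vec True x y = segre_vec True (coeff [:x 0, x 1, x 2:]) (coeff [:y 0, y 1:])"
    by (rule segre_vec_cong) (auto simp: coeff_quadratic coeff_linear le_Suc_eq numeral_eq_Suc)
  then have cv: "coeffvec P = segre_vec True x y"
    unfolding P_def D_1_0_11_product m[symmetric] coeffvec_quadratic_in_w by simp
  have "[:x 0, x 1, x 2:] \<noteq> 0" "[:y 0, y 1:] \<noteq> 0"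
    using p(2-5) by (auto simp: le_Suc_eq numeral_eq_Suc)
  then have "P \<noteq> 0" unfolding P_def D_1_0_11_product m[symmetric] by (simp; blast)
  then show "p \<in> D_1_0_11" unfolding D_1_0_11_def p(1) cv[symmetric] P_def by blast
qed

theorem proposition5p3:
  shows "(zariski_closed P7idx D_11_0_1 \<and> (\<exists>\<phi>. biregular Sidx P7idx segre_P2P1 D_11_0_1 \<phi>) \<and>
          zar_irreducible P7idx D_11_0_1 \<and> zar_smooth P7idx D_11_0_1) \<and>
         (zariski_closed P7idx D_1_0_11 \<and> (\<exists>\<phi>. biregular Sidx P7idx segre_P2P1 D_1_0_11 \<phi>) \<and>
          zar_irreducible P7idx D_1_0_11 \<and> zar_smooth P7idx D_1_0_11)"
  unfolding D_11_0_1_eq_segre_var D_1_0_11_eq_segre_var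
  using segre_var_closed segre_var_biregular segre_var_irreducible segre_var_smooth by blast

end
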